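(* Let $M$ be a smooth $n$-manifold with a torsion-free linear connection $\nabla$ and a symmetric $(0,2)$-tensor field $c$, and let $\widetilde{\nabla}$ be the linear connection on $T^{\ast}M$ given in the adapted frame by $\widetilde{\nabla}_{E_{\overline{i}}}E_{\overline{j}}=0$, $\widetilde{\nabla}_{E_{\overline{i}}}E_{j}=0$, $\widetilde{\nabla}_{E_{i}}E_{\overline{j}}=-\Gamma^{j}_{ih}E_{\overline{h}}$, $\widetilde{\nabla}_{E_{i}}E_{j}=\Gamma^{h}_{ij}E_{h}+\tfrac12(\nabla_i c_{jh}+\nabla_j c_{ih}-\nabla_h c_{ij})E_{\overline{h}}$. Then $T^{\ast}M$ is Ricci semi-symmetric with respect to $\widetilde\nabla$ if and only if $M$ is Ricci semi-symmetric with respect to $\nabla$.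
   Context: Summation convention; $\overline{i}=n+i$. $\Gamma^h_{ij}$ are the coefficients of $\nabla$ in local coordinates $(x^i)$; $\nabla_ic_{jk}$ the components of $\nabla c$. On $T^{\ast}M$ use induced coordinates $(x^i,p_i)$, $\partial_{\overline i}=\partial/\partial p_i$, and the adapted frame $E_j=\partial_j+p_a\Gamma^a_{hj}\partial_{\overline h}$, $E_{\overline j}=\partial_{\overline j}$. (The connection $\widetilde\nabla$ is the metric connection of the modified Riemannian extension $\overline{g}_{\nabla,c}$ with torsion $\widetilde T(E_i,E_j)=-p_sR_{ijr}^{\ \ \ s}E_{\overline r}$, other adapted torsion components zero.) For a linear connection $D$ on a manifold $N$ with curvature $K(X,Y)=D_XD_Y-D_YD_X-D_{[X,Y]}$, its Ricci tensor is $\mathrm{Ric}(Y,Z)=\operatorname{trace}(X\mapsto K(X,Y)Z)$; $N$ is Ricci semi-symmetric with respect to $D$ if $(K(X,Y)\cdot\mathrm{Ric})(Z,W)=-\mathrm{Ric}(K(X,Y)Z,W)-\mathrm{Ric}(Z,K(X,Y)W)=0$ for all vector fields $X,Y,Z,W$. *)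

theory Defs
  imports "HOL-Analysis.Analysis"
begin

(* Local (coordinate) setting: M is modelled by an open set U of a Euclidean space 'a
   (coordinates = inner products with the Basis vectors), T*M over U by U \<times> UNIV in 'a \<times> 'a,
   point (x,p), p_i = p \<bullet> i. *)

primrec pd :: "'a list \<Rightarrow> ('a::real_normed_vector \<Rightarrow> 'c::real_normed_vector) \<Rightarrow> 'a \<Rightarrow> 'c" where
  "pd [] f = f"
| "pd (v # vs) f = (\<lambda>x. frechet_derivative (pd vs f) (at x) v)"

definition sm_on :: "'a::real_normed_vector set \<Rightarrow> ('a \<Rightarrow> 'c::real_normed_vector) \<Rightarrow> bool" where
  "sm_on V f \<longleftrightarrow> (\<forall>vs. \<forall>x\<in>V. pd vs f differentiable (at x))"

definition lie :: "('b::euclidean_space \<Rightarrow> 'b) \<Rightarrow> ('b \<Rightarrow> 'b) \<Rightarrow> 'b \<Rightarrow> 'b" where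
  "lie X Y = (\<lambda>x. frechet_derivative Y (at x) (X x) - frechet_derivative X (at x) (Y x))"

definition curv :: "(('b::euclidean_space \<Rightarrow> 'b) \<Rightarrow> ('b \<Rightarrow> 'b) \<Rightarrow> 'b \<Rightarrow> 'b)
     \<Rightarrow> ('b \<Rightarrow> 'b) \<Rightarrow> ('b \<Rightarrow> 'b) \<Rightarrow> ('b \<Rightarrow> 'b) \<Rightarrow> 'b \<Rightarrow> 'b" where
  "curv D X Y Z = (\<lambda>x. D X (D Y Z) x - D Y (D X Z) x - D (lie X Y) Z x)"

definition ric :: "(('b::euclidean_space \<Rightarrow> 'b) \<Rightarrow> ('b \<Rightarrow> 'b) \<Rightarrow> 'b \<Rightarrow> 'b)
     \<Rightarrow> ('b \<Rightarrow> 'b) \<Rightarrow> ('b \<Rightarrow> 'b) \<Rightarrow> 'b \<Rightarrow> real" where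
  "ric D Y Z = (\<lambda>x. \<Sum>b\<in>Basis. curv D (\<lambda>_. b) Y Z x \<bullet> b)"

definition ricci_semisym :: "'b::euclidean_space set \<Rightarrow> (('b \<Rightarrow> 'b) \<Rightarrow> ('b \<Rightarrow> 'b) \<Rightarrow> 'b \<Rightarrow> 'b) \<Rightarrow> bool" where
  "ricci_semisym V D \<longleftrightarrow>
     (\<forall>X Y Z W. sm_on V X \<and> sm_on V Y \<and> sm_on V Z \<and> sm_on V W \<longrightarrow>
        (\<forall>x\<in>V. - ric D (curv D X Y Z) W x - ric D Z (curv D X Y W) x = 0))"

(* Gam i j h x = \<Gamma>^h_{ij}(x);  c i j x = c_{ij}(x) *)
definition connM :: "('a::euclidean_space \<Rightarrow> 'a \<Rightarrow> 'a \<Rightarrow> 'a \<Rightarrow> real) \<Rightarrow> ('a \<Rightarrow> 'a) \<Rightarrow> ('a \<Rightarrow> 'a) \<Rightarrow> 'a \<Rightarrow> 'a" where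
  "connM Gam X Y = (\<lambda>x. frechet_derivative Y (at x) (X x)
      + (\<Sum>i\<in>Basis. \<Sum>j\<in>Basis. \<Sum>h\<in>Basis. (Gam i j h x * (X x \<bullet> i) * (Y x \<bullet> j)) *\<^sub>R h))"

definition covc :: "('a::euclidean_space \<Rightarrow> 'a \<Rightarrow> 'a \<Rightarrow> 'a \<Rightarrow> real) \<Rightarrow> ('a \<Rightarrow> 'a \<Rightarrow> 'a \<Rightarrow> real)
     \<Rightarrow> 'a \<Rightarrow> 'a \<Rightarrow> 'a \<Rightarrow> 'a \<Rightarrow> real" where
  "covc Gam c i j k x = frechet_derivative (c j k) (at x) i
      - (\<Sum>m\<in>Basis. Gam i j m x * c m k x) - (\<Sum>m\<in>Basis. Gam i k m x * c j m x)"

(* adapted frame index set: Inl j \<leftrightarrow> E_j, Inr j \<leftrightarrow> E_{bar j} *)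
definition adI :: "('a::euclidean_space + 'a) set" where
  "adI = Inl ` Basis \<union> Inr ` Basis"

fun adE :: "('a::euclidean_space \<Rightarrow> 'a \<Rightarrow> 'a \<Rightarrow> 'a \<Rightarrow> real) \<Rightarrow> 'a + 'a \<Rightarrow> 'a \<times> 'a \<Rightarrow> 'a \<times> 'a" where
  "adE Gam (Inl j) z = (j, \<Sum>h\<in>Basis. (\<Sum>a\<in>Basis. (snd z \<bullet> a) * Gam h j a (fst z)) *\<^sub>R h)"
| "adE Gam (Inr j) z = (0, j)"

(* components of a vector field on T*U with respect to the adapted frame *)
fun adC :: "('a::euclidean_space \<Rightarrow> 'a \<Rightarrow> 'a \<Rightarrow> 'a \<Rightarrow> real) \<Rightarrow> 'a + 'a \<Rightarrow> ('a \<times> 'a \<Rightarrow> 'a \<times> 'a) \<Rightarrow> 'a \<times> 'a \<Rightarrow> real" where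
  "adC Gam (Inl j) V z = fst (V z) \<bullet> j"
| "adC Gam (Inr h) V z = snd (V z) \<bullet> h
      - (\<Sum>j\<in>Basis. (fst (V z) \<bullet> j) * (\<Sum>a\<in>Basis. (snd z \<bullet> a) * Gam h j a (fst z)))"

(* connection coefficients: \<nabla>~_{E_a} E_b = \<Sum>_d omega a b d E_d *)
fun omega :: "('a::euclidean_space \<Rightarrow> 'a \<Rightarrow> 'a \<Rightarrow> 'a \<Rightarrow> real) \<Rightarrow> ('a \<Rightarrow> 'a \<Rightarrow> 'a \<Rightarrow> real)
     \<Rightarrow> 'a + 'a \<Rightarrow> 'a + 'a \<Rightarrow> 'a + 'a \<Rightarrow> 'a \<Rightarrow> real" where
  "omega Gam c (Inl i) (Inl j) (Inl h) x = Gam i j h x"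
| "omega Gam c (Inl i) (Inl j) (Inr h) x =
     (covc Gam c i j h x + covc Gam c j i h x - covc Gam c h i j x) / 2"
| "omega Gam c (Inl i) (Inr j) (Inr h) x = - Gam i h j x"
| "omega Gam c (Inl i) (Inr j) (Inl h) x = 0"
| "omega Gam c (Inr i) b d x = 0"

definition connT :: "('a::euclidean_space \<Rightarrow> 'a \<Rightarrow> 'a \<Rightarrow> 'a \<Rightarrow> real) \<Rightarrow> ('a \<Rightarrow> 'a \<Rightarrow> 'a \<Rightarrow> real)
     \<Rightarrow> ('a \<times> 'a \<Rightarrow> 'a \<times> 'a) \<Rightarrow> ('a \<times> 'a \<Rightarrow> 'a \<times> 'a) \<Rightarrow> 'a \<times> 'a \<Rightarrow> 'a \<times> 'a" where
  "connT Gam c X Y = (\<lambda>z.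
      (\<Sum>b\<in>adI. frechet_derivative (adC Gam b Y) (at z) (X z) *\<^sub>R adE Gam b z)
    + (\<Sum>a\<in>adI. \<Sum>b\<in>adI. \<Sum>d\<in>adI.
          (adC Gam a X z * adC Gam b Y z * omega Gam c a b d (fst z)) *\<^sub>R adE Gam d z))"

end

theory Submission
  imports Defs
begin

(* In coordinates both connections have the form D_X Y = dY(X) + G(X, Y) with a bilinear
   Christoffel map G; for T*M, in the coordinates (x, p), G is read off by expanding the adapted
   frame. For such a connection the symmetry of second derivatives makes K(X, Y)Z at z depend
   only on X z, Y z, Z z: it is dG(u)(v, w) - dG(v)(u, w) + G(u, G(v, w)) - G(v, G(u, w)).
   So Ricci semi-symmetry is a pointwise identity for this tensor.
   On T*M the horizontal part of the curvature tensor at (x, p) is the curvature tensor of the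
   base at x applied to the horizontal parts of the arguments, while its vertical part vanishes
   as soon as the first argument is vertical. Hence the Ricci tensor of T*M is the pull-back of
   that of M, the curvature operator commutes with the projection, and the semi-symmetry
   identity of T*M at (x, p) is the one of M at x evaluated on projected vectors. *)

section \<open>Smooth functions\<close>

lemma pd_snoc: "pd (vs @ [v]) f = pd vs (\<lambda>x. frechet_derivative f (at x) v)"
  by (induction vs) auto

lemma frechet_derivative_cong_open:
  assumes "open V" "x \<in> V" "\<And>y. y \<in> V \<Longrightarrow> f y = g y"
  shows "frechet_derivative f (at x) = frechet_derivative g (at x)"
proof -
  have "(f has_derivative D) (at x) \<longleftrightarrow> (g has_derivative D) (at x)" for D
    using assms by (metis has_derivative_transform_within_open)
  then show ?thesis unfolding frechet_derivative_def by simp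
qed

lemma pd_cong_open:
  assumes "open V" "\<And>y. y \<in> V \<Longrightarrow> f y = g y" "x \<in> V"
  shows "pd vs f x = pd vs g x"
  using assms(3)
proof (induction vs arbitrary: x)
  case Nil
  then show ?case using assms by simp
next
  case (Cons v vs)
  have "frechet_derivative (pd vs f) (at x) = frechet_derivative (pd vs g) (at x)"
    by (rule frechet_derivative_cong_open[OF assms(1) Cons.prems]) (use Cons.IH in auto)
  then show ?case by simp
qed

lemma differentiable_transform_within_open:
  assumes "f differentiable (at x)" "open V" "x \<in> V" "\<And>y. y \<in> V \<Longrightarrow> f y = g y"
  shows "g differentiable (at x)"
  using assms unfolding differentiable_def by (metis has_derivative_transform_within_open)

lemma sm_on_transform_within_open:
  assumes "sm_on V f" "open V" "\<And>y. y \<in> V \<Longrightarrow> f y = g y"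
  shows "sm_on V g"
  unfolding sm_on_def
proof (intro allI ballI)
  fix vs x assume x: "x \<in> V"
  have "pd vs f differentiable (at x)" using assms(1) x unfolding sm_on_def by blast
  then show "pd vs g differentiable (at x)"
    by (rule differentiable_transform_within_open[OF _ assms(2) x]) (rule pd_cong_open[OF assms(2,3)])
qed

lemma sm_on_imp_differentiable: "sm_on V f \<Longrightarrow> x \<in> V \<Longrightarrow> f differentiable (at x)"
  unfolding sm_on_def by (metis pd.simps(1))

lemma sm_on_has_derivative:
  "sm_on V f \<Longrightarrow> x \<in> V \<Longrightarrow> (f has_derivative frechet_derivative f (at x)) (at x)"
  using sm_on_imp_differentiable frechet_derivative_works by blast

lemma sm_on_frechet_derivative: "sm_on V f \<Longrightarrow> sm_on V (\<lambda>x. frechet_derivative f (at x) v)"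
  unfolding sm_on_def by (metis pd_snoc)

lemma sm_on_coinduct:
  assumes V: "open V" and P: "P f"
    and step: "\<And>f. P f \<Longrightarrow> (\<forall>x\<in>V. f differentiable (at x)) \<and>
                  (\<forall>v. \<exists>g. P g \<and> (\<forall>x\<in>V. g x = frechet_derivative f (at x) v))"
  shows "sm_on V f"
proof -
  have pd_P: "\<forall>f. P f \<longrightarrow> (\<exists>g. P g \<and> (\<forall>x\<in>V. pd vs f x = g x))" for vs
  proof (induction vs)
    case Nil
    then show ?case by auto
  next
    case (Cons v vs)
    show ?case
    proof (intro allI impI)
      fix f assume "P f"
      then obtain g where g: "P g" "\<forall>x\<in>V. pd vs f x = g x" using Cons.IH by blast
      then obtain g' where g': "P g'" "\<forall>x\<in>V. g' x = frechet_derivative g (at x) v"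
        using step by blast
      have "pd (v # vs) f x = g' x" if x: "x \<in> V" for x
      proof -
        have "frechet_derivative (pd vs f) (at x) = frechet_derivative g (at x)"
          by (rule frechet_derivative_cong_open[OF V x]) (use g in auto)
        then show ?thesis using g' x by simp
      qed
      then show "\<exists>g. P g \<and> (\<forall>x\<in>V. pd (v # vs) f x = g x)" using g' by blast
    qed
  qed
  show ?thesis unfolding sm_on_def
  proof (intro allI ballI)
    fix vs x assume x: "x \<in> V"
    obtain g where g: "P g" "\<forall>x\<in>V. pd vs f x = g x" using pd_P P by blast
    have "g differentiable (at x)" using step g x by blast
    then show "pd vs f differentiable (at x)"
      by (rule differentiable_transform_within_open[OF _ V x]) (use g in auto)
  qed
qed

lemma sm_on_const: "open V \<Longrightarrow> sm_on V (\<lambda>x. c)"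
  by (rule sm_on_coinduct[where P="\<lambda>f. \<exists>c. f = (\<lambda>x. c)"]) auto

lemma sm_on_bounded_linear:
  assumes V: "open V" and L: "bounded_linear L"
  shows "sm_on V L"
proof (rule sm_on_coinduct[where P="\<lambda>f. f = L \<or> (\<exists>c. f = (\<lambda>x. c))", OF V])
  have dL: "(L has_derivative L) (at x)" for x
    using L by (rule bounded_linear_imp_has_derivative)
  fix f assume "f = L \<or> (\<exists>c. f = (\<lambda>x. c))"
  then show "(\<forall>x\<in>V. f differentiable at x) \<and>
      (\<forall>v. \<exists>g. (g = L \<or> (\<exists>c. g = (\<lambda>x. c))) \<and> (\<forall>x\<in>V. g x = frechet_derivative f (at x) v))"
    by (auto simp: frechet_derivative_at[OF dL, symmetric] intro: differentiableI[OF dL])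
qed simp

lemma sm_on_compose_bounded_linear:
  assumes V: "open V" and L: "bounded_linear L" and LV: "L ` V \<subseteq> U" and f: "sm_on U f"
  shows "sm_on V (\<lambda>z. f (L z))"
proof (rule sm_on_coinduct[where P="\<lambda>h. \<exists>f. sm_on U f \<and> h = (\<lambda>z. f (L z))", OF V])
  fix h assume "\<exists>f. sm_on U f \<and> h = (\<lambda>z. f (L z))"
  then obtain f where f: "sm_on U f" and h: "h = (\<lambda>z. f (L z))" by blast
  have d: "((\<lambda>z. f (L z)) has_derivative (\<lambda>v. frechet_derivative f (at (L z)) (L v))) (at z)"
    if "z \<in> V" for z
    using has_derivative_compose[OF bounded_linear_imp_has_derivative[OF L]
        sm_on_has_derivative[OF f]] that LV by auto
  show "(\<forall>z\<in>V. h differentiable at z) \<and>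
      (\<forall>v. \<exists>k. (\<exists>f. sm_on U f \<and> k = (\<lambda>z. f (L z))) \<and> (\<forall>z\<in>V. k z = frechet_derivative h (at z) v))"
    unfolding h
  proof (intro conjI allI)
    fix v
    show "\<exists>k. (\<exists>f. sm_on U f \<and> k = (\<lambda>z. f (L z))) \<and>
        (\<forall>z\<in>V. k z = frechet_derivative (\<lambda>z. f (L z)) (at z) v)"
      using sm_on_frechet_derivative[OF f, of "L v"]
      by (auto simp: frechet_derivative_at[OF d, symmetric])
  qed (use d in \<open>auto simp: differentiable_def\<close>)
qed (use f in auto)

text \<open>Finite sums of products of smooth functions are closed under directional derivatives by the
  product rule, so \<open>sm_on_coinduct\<close> applies to them; sums and linear images are special cases.\<close>

inductive smooth_products ::
    "('a::real_normed_vector \<Rightarrow> 'b::real_normed_vector \<Rightarrow> 'c::real_normed_vector)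
    \<Rightarrow> 'd::real_normed_vector set \<Rightarrow> ('d \<Rightarrow> 'c) \<Rightarrow> bool" for pr V where
  product: "sm_on V f \<Longrightarrow> sm_on V g \<Longrightarrow> smooth_products pr V (\<lambda>x. pr (f x) (g x))"
| add: "smooth_products pr V h1 \<Longrightarrow> smooth_products pr V h2 \<Longrightarrow>
    smooth_products pr V (\<lambda>x. h1 x + h2 x)"

lemma smooth_products_derivative:
  assumes pr: "bounded_bilinear pr" and h: "smooth_products pr V h"
  shows "(\<forall>x\<in>V. h differentiable at x) \<and>
    (\<forall>v. \<exists>k. smooth_products pr V k \<and> (\<forall>x\<in>V. k x = frechet_derivative h (at x) v))"
  using h
proof induction
  case (product f g)
  have d: "((\<lambda>x. pr (f x) (g x)) has_derivative
      (\<lambda>v. pr (f x) (frechet_derivative g (at x) v) + pr (frechet_derivative f (at x) v) (g x))) (at x)"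
    if "x \<in> V" for x
    using bounded_bilinear.FDERIV[OF pr sm_on_has_derivative[OF product(1) that]
        sm_on_has_derivative[OF product(2) that]] .
  show ?case
  proof (intro conjI allI)
    fix v
    show "\<exists>k. smooth_products pr V k \<and> (\<forall>x\<in>V. k x = frechet_derivative (\<lambda>x. pr (f x) (g x)) (at x) v)"
      by (rule exI[of _ "\<lambda>x. pr (f x) (frechet_derivative g (at x) v) + pr (frechet_derivative f (at x) v) (g x)"])
         (use sm_on_frechet_derivative[OF product(1)] sm_on_frechet_derivative[OF product(2)] product(1,2)
           in \<open>auto simp: frechet_derivative_at[OF d, symmetric] intro!: smooth_products.intros\<close>)
  qed (use d in \<open>auto simp: differentiable_def\<close>)
next
  case (add h1 h2)
  have d: "((\<lambda>x. h1 x + h2 x) has_derivative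
      (\<lambda>v. frechet_derivative h1 (at x) v + frechet_derivative h2 (at x) v)) (at x)" if "x \<in> V" for x
    using add.IH that frechet_derivative_works by (blast intro: has_derivative_add)
  show ?case
  proof (intro conjI allI)
    fix v
    obtain k1 where k1: "smooth_products pr V k1" "\<forall>x\<in>V. k1 x = frechet_derivative h1 (at x) v"
      using add.IH by blast
    obtain k2 where k2: "smooth_products pr V k2" "\<forall>x\<in>V. k2 x = frechet_derivative h2 (at x) v"
      using add.IH by blast
    show "\<exists>k. smooth_products pr V k \<and> (\<forall>x\<in>V. k x = frechet_derivative (\<lambda>x. h1 x + h2 x) (at x) v)"
      by (rule exI[of _ "\<lambda>x. k1 x + k2 x"])
         (use k1 k2 in \<open>auto simp: frechet_derivative_at[OF d, symmetric] intro!: smooth_products.intros\<close>)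
  qed (use d in \<open>auto simp: differentiable_def\<close>)
qed

lemma sm_on_smooth_products:
  "open V \<Longrightarrow> bounded_bilinear pr \<Longrightarrow> smooth_products pr V h \<Longrightarrow> sm_on V h"
  by (rule sm_on_coinduct[where P="smooth_products pr V"]) (auto dest: smooth_products_derivative)

lemma sm_on_bilinear:
  "open V \<Longrightarrow> bounded_bilinear pr \<Longrightarrow> sm_on V f \<Longrightarrow> sm_on V g \<Longrightarrow> sm_on V (\<lambda>x. pr (f x) (g x))"
  by (blast intro: sm_on_smooth_products smooth_products.product)

lemma sm_on_add:
  assumes V: "open V" and "sm_on V f" "sm_on V g"
  shows "sm_on V (\<lambda>x. f x + g x)"
proof -
  have "smooth_products scaleR V (\<lambda>x. (\<lambda>_. 1::real) x *\<^sub>R f x + (\<lambda>_. 1::real) x *\<^sub>R g x)"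
    by (intro smooth_products.intros sm_on_const V assms)
  then show ?thesis by (auto dest: sm_on_smooth_products[OF V bounded_bilinear_scaleR])
qed

lemma sm_on_bounded_linear_compose:
  assumes V: "open V" and L: "bounded_linear L" and f: "sm_on V f"
  shows "sm_on V (\<lambda>x. L (f x))"
  using sm_on_bilinear[OF V bounded_bilinear.comp[OF bounded_bilinear_scaleR bounded_linear_ident L]
      sm_on_const[OF V, of 1] f] by simp

lemma sm_on_sum:
  assumes V: "open V" and "\<And>i. i \<in> A \<Longrightarrow> sm_on V (f i)"
  shows "sm_on V (\<lambda>x. \<Sum>i\<in>A. f i x)"
  using assms(2)
  by (induction A rule: infinite_finite_induct) (simp_all add: sm_on_const[OF V] sm_on_add[OF V])

lemma sm_on_mult: "open V \<Longrightarrow> sm_on V f \<Longrightarrow> sm_on V g \<Longrightarrow> sm_on V (\<lambda>x. f x * g x :: real)"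
  using sm_on_bilinear[OF _ bounded_bilinear_mult] .

lemma sm_on_scaleR: "open V \<Longrightarrow> sm_on V f \<Longrightarrow> sm_on V g \<Longrightarrow> sm_on V (\<lambda>x. f x *\<^sub>R g x)"
  using sm_on_bilinear[OF _ bounded_bilinear_scaleR] .

lemma sm_on_scaleR_const: "open V \<Longrightarrow> sm_on V f \<Longrightarrow> sm_on V (\<lambda>x. f x *\<^sub>R b)"
  using sm_on_scaleR[OF _ _ sm_on_const] .

lemma sm_on_inner_const: "open V \<Longrightarrow> sm_on V f \<Longrightarrow> sm_on V (\<lambda>x. f x \<bullet> b)"
  using sm_on_bounded_linear_compose[OF _ bounded_linear_inner_left] .

lemma sm_on_diff:
  assumes V: "open V" and "sm_on V f" "sm_on V g"
  shows "sm_on V (\<lambda>x. f x - g x)"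
  using sm_on_add[OF V assms(2) sm_on_bounded_linear_compose[OF V bounded_linear_minus[OF bounded_linear_ident] assms(3)]]
  by simp

lemma sm_on_divide_const: "open V \<Longrightarrow> sm_on V f \<Longrightarrow> sm_on V (\<lambda>x. f x / (r::real))"
  using sm_on_bounded_linear_compose[OF _ bounded_linear_divide] .

lemma sm_on_Pair:
  assumes V: "open V" and "sm_on V f" "sm_on V g"
  shows "sm_on V (\<lambda>x. (f x, g x))"
proof -
  have "sm_on V (\<lambda>x. (f x, 0) + (0, g x))"
    by (rule sm_on_add[OF V]; rule sm_on_bounded_linear_compose[OF V])
       (auto intro: assms bounded_linear_Pair bounded_linear_ident bounded_linear_zero)
  then show ?thesis by simp
qed

section \<open>Second derivatives\<close>

lemma norm_scaleR_add_le:
  assumes "0 \<le> s" "s \<le> t" "0 \<le> w" "w \<le> t"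
  shows "norm (s *\<^sub>R u + w *\<^sub>R v) \<le> t * (norm u + norm v)"
proof -
  have "norm (s *\<^sub>R u + w *\<^sub>R v) \<le> s * norm u + w * norm v"
    using norm_triangle_ineq[of "s *\<^sub>R u" "w *\<^sub>R v"] assms by simp
  also have "\<dots> \<le> t * norm u + t * norm v"
    using assms by (intro add_mono mult_right_mono) auto
  finally show ?thesis by (simp add: algebra_simps)
qed

lemma second_difference_mean_value:
  fixes f :: "'b::real_normed_vector \<Rightarrow> real"
  assumes fd: "\<And>y. y \<in> V \<Longrightarrow> (f has_derivative f' y) (at y)"
    and t: "0 < t"
    and inV: "\<And>s w. 0 \<le> s \<Longrightarrow> s \<le> t \<Longrightarrow> 0 \<le> w \<Longrightarrow> w \<le> t \<Longrightarrow> x + s *\<^sub>R u + w *\<^sub>R v \<in> V"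
  obtains s where "0 < s" "s < t"
    "f (x + t *\<^sub>R u + t *\<^sub>R v) - f (x + t *\<^sub>R u) - f (x + t *\<^sub>R v) + f x
       = t * (f' (x + s *\<^sub>R u + t *\<^sub>R v) u - f' (x + s *\<^sub>R u) u)"
proof -
  define g where "g s = f (x + s *\<^sub>R u + t *\<^sub>R v) - f (x + s *\<^sub>R u)" for s
  define g' where "g' s h = h * (f' (x + s *\<^sub>R u + t *\<^sub>R v) u - f' (x + s *\<^sub>R u) u)" for s h :: real
  have "(g has_derivative g' s) (at s within {0..t})" if s: "0 \<le> s" "s \<le> t" for s
  proof -
    have V1: "x + s *\<^sub>R u + t *\<^sub>R v \<in> V" and V0: "x + s *\<^sub>R u \<in> V"
      using inV[OF s, of t] inV[OF s, of 0] t by simp_all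
    have "((\<lambda>s. f (x + s *\<^sub>R u + t *\<^sub>R v) - f (x + s *\<^sub>R u)) has_derivative
        (\<lambda>h. f' (x + s *\<^sub>R u + t *\<^sub>R v) (h *\<^sub>R u) - f' (x + s *\<^sub>R u) (h *\<^sub>R u))) (at s within {0..t})"
      by (intro has_derivative_diff has_derivative_compose[OF _ fd] V0 V1 derivative_eq_intros) auto
    moreover have "linear (f' (x + s *\<^sub>R u + t *\<^sub>R v))" "linear (f' (x + s *\<^sub>R u))"
      using fd[OF V1] fd[OF V0] has_derivative_linear by auto
    ultimately show ?thesis
      unfolding g_def g'_def by (simp add: linear_scale algebra_simps)
  qed
  then obtain s where "s \<in> {0<..<t}" "g t - g 0 = g' s (t - 0)"
    using mvt_simple[of 0 t g g'] t by auto
  then show ?thesis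
    by (intro that[of s]) (auto simp: g_def g'_def)
qed

lemma second_difference_bound:
  fixes f :: "'b::real_normed_vector \<Rightarrow> real"
  assumes fd: "\<And>y. y \<in> V \<Longrightarrow> (f has_derivative f' y) (at y)"
    and t: "0 < t"
    and inV: "\<And>s w. 0 \<le> s \<Longrightarrow> s \<le> t \<Longrightarrow> 0 \<le> w \<Longrightarrow> w \<le> t \<Longrightarrow> x + s *\<^sub>R u + w *\<^sub>R v \<in> V"
    and Su: "linear Su"
    and approx: "\<And>s w. 0 \<le> s \<Longrightarrow> s \<le> t \<Longrightarrow> 0 \<le> w \<Longrightarrow> w \<le> t \<Longrightarrow>
      \<bar>f' (x + s *\<^sub>R u + w *\<^sub>R v) u - f' x u - Su (s *\<^sub>R u + w *\<^sub>R v)\<bar> \<le> \<epsilon>"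
  shows "\<bar>f (x + t *\<^sub>R u + t *\<^sub>R v) - f (x + t *\<^sub>R u) - f (x + t *\<^sub>R v) + f x - t\<^sup>2 * Su v\<bar> \<le> t * (2 * \<epsilon>)"
proof -
  obtain s where s: "0 < s" "s < t" and mv:
    "f (x + t *\<^sub>R u + t *\<^sub>R v) - f (x + t *\<^sub>R u) - f (x + t *\<^sub>R v) + f x
       = t * (f' (x + s *\<^sub>R u + t *\<^sub>R v) u - f' (x + s *\<^sub>R u) u)"
    using second_difference_mean_value[OF fd t inV] by blast
  define A where "A = f' (x + s *\<^sub>R u + t *\<^sub>R v) u - f' x u - Su (s *\<^sub>R u + t *\<^sub>R v)"
  define B where "B = f' (x + s *\<^sub>R u + 0 *\<^sub>R v) u - f' x u - Su (s *\<^sub>R u + 0 *\<^sub>R v)"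
  have "Su (s *\<^sub>R u + t *\<^sub>R v) - Su (s *\<^sub>R u) = t * Su v"
    using Su by (simp add: linear_add linear_scale)
  then have "f' (x + s *\<^sub>R u + t *\<^sub>R v) u - f' (x + s *\<^sub>R u) u - t * Su v = A - B"
    unfolding A_def B_def by simp
  moreover have "\<bar>A\<bar> \<le> \<epsilon>" "\<bar>B\<bar> \<le> \<epsilon>"
    unfolding A_def B_def using approx[of s t] approx[of s 0] s t by simp_all
  ultimately have "\<bar>f' (x + s *\<^sub>R u + t *\<^sub>R v) u - f' (x + s *\<^sub>R u) u - t * Su v\<bar> \<le> 2 * \<epsilon>"
    using abs_triangle_ineq4[of A B] by linarith
  moreover have "f (x + t *\<^sub>R u + t *\<^sub>R v) - f (x + t *\<^sub>R u) - f (x + t *\<^sub>R v) + f x - t\<^sup>2 * Su v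
      = t * (f' (x + s *\<^sub>R u + t *\<^sub>R v) u - f' (x + s *\<^sub>R u) u - t * Su v)"
    unfolding mv by (simp add: power2_eq_square algebra_simps)
  ultimately show ?thesis
    using t by (simp add: abs_mult mult_left_mono)
qed

lemma second_difference_tendsto:
  fixes f :: "'b::real_normed_vector \<Rightarrow> real"
  assumes V: "open V" and x: "x \<in> V"
    and fd: "\<And>y. y \<in> V \<Longrightarrow> (f has_derivative f' y) (at y)"
    and du: "((\<lambda>y. f' y u) has_derivative Su) (at x)"
  shows "((\<lambda>t. (f (x + t *\<^sub>R u + t *\<^sub>R v) - f (x + t *\<^sub>R u) - f (x + t *\<^sub>R v) + f x) / t\<^sup>2)
           \<longlongrightarrow> Su v) (at_right 0)"
  unfolding tendsto_iff eventually_at_right_field dist_real_def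
proof (intro allI impI)
  fix e :: real assume e: "e > 0"
  define K where "K = norm u + norm v + 1"
  have K: "K > 0" unfolding K_def by (simp add: add_nonneg_pos)
  obtain d where d: "d > 0" and
    approx: "\<And>y. norm (y - x) < d \<Longrightarrow> \<bar>f' y u - f' x u - Su (y - x)\<bar> \<le> e / (4 * K) * norm (y - x)"
    using du e K unfolding has_derivative_at_alt
    by (metis real_norm_def divide_pos_pos zero_less_mult_iff zero_less_numeral)
  obtain r where r: "r > 0" "ball x r \<subseteq> V" using V x openE by blast
  show "\<exists>b>0. \<forall>t>0. t < b \<longrightarrow>
      \<bar>(f (x + t *\<^sub>R u + t *\<^sub>R v) - f (x + t *\<^sub>R u) - f (x + t *\<^sub>R v) + f x) / t\<^sup>2 - Su v\<bar> < e"
  proof (intro exI[of _ "min d r / K"] conjI allI impI)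
    show "min d r / K > 0" using d r K by simp
    fix t :: real assume t: "0 < t" "t < min d r / K"
    have near: "norm (s *\<^sub>R u + w *\<^sub>R v) \<le> t * K" "norm (s *\<^sub>R u + w *\<^sub>R v) < min d r"
      if "0 \<le> s" "s \<le> t" "0 \<le> w" "w \<le> t" for s w
      using norm_scaleR_add_le[OF that, of u v] t K unfolding K_def
      by (simp_all add: algebra_simps pos_less_divide_eq)
    have "x + (s *\<^sub>R u + w *\<^sub>R v) \<in> ball x r" if "0 \<le> s" "s \<le> t" "0 \<le> w" "w \<le> t" for s w
      using near(2)[OF that] by (simp add: dist_norm norm_minus_commute add.commute)
    then have inV: "x + s *\<^sub>R u + w *\<^sub>R v \<in> V" if "0 \<le> s" "s \<le> t" "0 \<le> w" "w \<le> t" for s w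
      using r(2) that by (auto simp: add.assoc)
    have err: "\<bar>f' (x + s *\<^sub>R u + w *\<^sub>R v) u - f' x u - Su (s *\<^sub>R u + w *\<^sub>R v)\<bar> \<le> e * t / 4"
      if "0 \<le> s" "s \<le> t" "0 \<le> w" "w \<le> t" for s w
    proof -
      have "\<bar>f' (x + s *\<^sub>R u + w *\<^sub>R v) u - f' x u - Su (s *\<^sub>R u + w *\<^sub>R v)\<bar>
          \<le> e / (4 * K) * norm (s *\<^sub>R u + w *\<^sub>R v)"
        using approx[of "x + (s *\<^sub>R u + w *\<^sub>R v)"] near[OF that] by (simp add: add.assoc)
      also have "\<dots> \<le> e / (4 * K) * (t * K)"
        using near(1)[OF that] e K by (intro mult_left_mono) auto
      finally show ?thesis using K by simp
    qed
    let ?D = "f (x + t *\<^sub>R u + t *\<^sub>R v) - f (x + t *\<^sub>R u) - f (x + t *\<^sub>R v) + f x"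
    from second_difference_bound[OF fd t(1) inV has_derivative_linear[OF du] err]
    have "\<bar>?D - t\<^sup>2 * Su v\<bar> / t\<^sup>2 \<le> e / 2"
      using t(1) by (simp add: pos_divide_le_eq power2_eq_square mult_ac)
    moreover have "?D / t\<^sup>2 - Su v = (?D - t\<^sup>2 * Su v) / t\<^sup>2"
      using t(1) by (simp add: field_simps)
    ultimately have "\<bar>?D / t\<^sup>2 - Su v\<bar> \<le> e / 2"
      by (simp only: abs_divide abs_power2)
    then show "\<bar>?D / t\<^sup>2 - Su v\<bar> < e"
      using e by linarith
  qed
qed

lemma has_derivative_second_symmetric:
  fixes f :: "'b::real_normed_vector \<Rightarrow> real"
  assumes V: "open V" and x: "x \<in> V"
    and fd: "\<And>y. y \<in> V \<Longrightarrow> (f has_derivative f' y) (at y)"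
    and du: "((\<lambda>y. f' y u) has_derivative Su) (at x)"
    and dv: "((\<lambda>y. f' y v) has_derivative Sv) (at x)"
  shows "Su v = Sv u"
proof (rule tendsto_unique[OF trivial_limit_at_right_real])
  show "((\<lambda>t. (f (x + t *\<^sub>R u + t *\<^sub>R v) - f (x + t *\<^sub>R u) - f (x + t *\<^sub>R v) + f x) / t\<^sup>2)
           \<longlongrightarrow> Su v) (at_right 0)"
    by (rule second_difference_tendsto[OF V x fd du])
  show "((\<lambda>t. (f (x + t *\<^sub>R u + t *\<^sub>R v) - f (x + t *\<^sub>R u) - f (x + t *\<^sub>R v) + f x) / t\<^sup>2)
           \<longlongrightarrow> Sv u) (at_right 0)"
    using second_difference_tendsto[OF V x fd dv, of u] by (simp add: algebra_simps)
qed

lemma frechet_derivative_Basis_expansion: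
  fixes f :: "'b::euclidean_space \<Rightarrow> 'c::real_normed_vector"
  assumes "f differentiable (at z)"
  shows "frechet_derivative f (at z) a = (\<Sum>i\<in>Basis. (a \<bullet> i) *\<^sub>R frechet_derivative f (at z) i)"
proof -
  have lin: "linear (frechet_derivative f (at z))" using assms by (rule linear_frechet_derivative)
  have "frechet_derivative f (at z) (\<Sum>i\<in>Basis. (a \<bullet> i) *\<^sub>R i)
      = (\<Sum>i\<in>Basis. (a \<bullet> i) *\<^sub>R frechet_derivative f (at z) i)"
    by (simp add: linear_sum[OF lin] linear_scale[OF lin])
  then show ?thesis by (simp add: euclidean_representation)
qed

lemma sm_on_frechet_derivative_commute:
  fixes Z :: "'b::euclidean_space \<Rightarrow> 'c::euclidean_space"
  assumes V: "open V" and Z: "sm_on V Z" and x: "x \<in> V"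
  shows "frechet_derivative (\<lambda>y. frechet_derivative Z (at y) w) (at x) u
       = frechet_derivative (\<lambda>y. frechet_derivative Z (at y) u) (at x) w"
proof (rule euclidean_eqI)
  fix b :: 'c assume b: "b \<in> Basis"
  have d1: "((\<lambda>y. Z y \<bullet> b) has_derivative (\<lambda>h. frechet_derivative Z (at y) h \<bullet> b)) (at y)" if "y \<in> V" for y
    using has_derivative_inner_left[OF sm_on_has_derivative[OF Z that]] .
  have d2: "((\<lambda>y. frechet_derivative Z (at y) v \<bullet> b) has_derivative
      (\<lambda>h. frechet_derivative (\<lambda>y. frechet_derivative Z (at y) v) (at x) h \<bullet> b)) (at x)" for v
    using has_derivative_inner_left[OF sm_on_has_derivative[OF sm_on_frechet_derivative[OF Z] x]] .
  show "frechet_derivative (\<lambda>y. frechet_derivative Z (at y) w) (at x) u \<bullet> b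
       = frechet_derivative (\<lambda>y. frechet_derivative Z (at y) u) (at x) w \<bullet> b"
    by (rule has_derivative_second_symmetric[OF V x d1 d2 d2])
qed

lemma sm_on_derivative_along:
  fixes X :: "'b::euclidean_space \<Rightarrow> 'b" and Y :: "'b \<Rightarrow> 'c::real_normed_vector"
  assumes V: "open V" and X: "sm_on V X" and Y: "sm_on V Y"
  shows "sm_on V (\<lambda>z. frechet_derivative Y (at z) (X z))"
proof (rule sm_on_transform_within_open[OF _ V])
  show "sm_on V (\<lambda>z. \<Sum>i\<in>Basis. (X z \<bullet> i) *\<^sub>R frechet_derivative Y (at z) i)"
    by (intro sm_on_sum[OF V] sm_on_scaleR[OF V] sm_on_inner_const[OF V] X sm_on_frechet_derivative[OF Y])
  show "(\<Sum>i\<in>Basis. (X z \<bullet> i) *\<^sub>R frechet_derivative Y (at z) i) = frechet_derivative Y (at z) (X z)"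
    if "z \<in> V" for z
    by (rule frechet_derivative_Basis_expansion[OF sm_on_imp_differentiable[OF Y that], symmetric])
qed

lemma sm_on_lie:
  "open V \<Longrightarrow> sm_on V (X :: 'b::euclidean_space \<Rightarrow> 'b) \<Longrightarrow> sm_on V Y \<Longrightarrow> sm_on V (lie X Y)"
  unfolding lie_def by (intro sm_on_diff sm_on_derivative_along)

lemma has_derivative_derivative_along:
  fixes Y :: "'b::euclidean_space \<Rightarrow> 'b" and Z :: "'b \<Rightarrow> 'c::real_normed_vector"
  assumes V: "open V" and Y: "sm_on V Y" and Z: "sm_on V Z" and z: "z \<in> V"
  shows "((\<lambda>y. frechet_derivative Z (at y) (Y y)) has_derivative
    (\<lambda>h. frechet_derivative Z (at z) (frechet_derivative Y (at z) h)
       + (\<Sum>i\<in>Basis. (Y z \<bullet> i) *\<^sub>R frechet_derivative (\<lambda>y. frechet_derivative Z (at y) i) (at z) h))) (at z)"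
proof -
  have "((\<lambda>y. \<Sum>i\<in>Basis. (Y y \<bullet> i) *\<^sub>R frechet_derivative Z (at y) i) has_derivative
    (\<lambda>h. \<Sum>i\<in>Basis. (Y z \<bullet> i) *\<^sub>R frechet_derivative (\<lambda>y. frechet_derivative Z (at y) i) (at z) h
        + (frechet_derivative Y (at z) h \<bullet> i) *\<^sub>R frechet_derivative Z (at z) i)) (at z)"
    by (intro has_derivative_sum has_derivative_scaleR has_derivative_inner_left
        sm_on_has_derivative[OF Y z] sm_on_has_derivative[OF sm_on_frechet_derivative[OF Z] z])
  then have "((\<lambda>y. \<Sum>i\<in>Basis. (Y y \<bullet> i) *\<^sub>R frechet_derivative Z (at y) i) has_derivative
    (\<lambda>h. frechet_derivative Z (at z) (frechet_derivative Y (at z) h)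
       + (\<Sum>i\<in>Basis. (Y z \<bullet> i) *\<^sub>R frechet_derivative (\<lambda>y. frechet_derivative Z (at y) i) (at z) h))) (at z)"
    by (rule has_derivative_eq_rhs)
      (simp only: sum.distrib frechet_derivative_Basis_expansion[OF sm_on_imp_differentiable[OF Z z], symmetric]
        add.commute)
  then show ?thesis
    by (rule has_derivative_transform_within_open[OF _ V z])
      (metis frechet_derivative_Basis_expansion sm_on_imp_differentiable[OF Z])
qed

lemma second_derivative_swap:
  fixes Z :: "'b::euclidean_space \<Rightarrow> 'c::euclidean_space"
  assumes V: "open V" and Z: "sm_on V Z" and z: "z \<in> V"
  shows "(\<Sum>i\<in>Basis. (a \<bullet> i) *\<^sub>R frechet_derivative (\<lambda>y. frechet_derivative Z (at y) i) (at z) b)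
       = (\<Sum>i\<in>Basis. (b \<bullet> i) *\<^sub>R frechet_derivative (\<lambda>y. frechet_derivative Z (at y) i) (at z) a)"
proof -
  let ?S = "\<lambda>i l. frechet_derivative (\<lambda>y. frechet_derivative Z (at y) i) (at z) l"
  have expand: "?S i c = (\<Sum>l\<in>Basis. (c \<bullet> l) *\<^sub>R ?S i l)" for i c
    using frechet_derivative_Basis_expansion[OF sm_on_imp_differentiable[OF sm_on_frechet_derivative[OF Z] z]] .
  have sym: "?S i l = ?S l i" for i l
    using sm_on_frechet_derivative_commute[OF V Z z] by metis
  have "(\<Sum>i\<in>Basis. (a \<bullet> i) *\<^sub>R ?S i b) = (\<Sum>i\<in>Basis. \<Sum>l\<in>Basis. ((a \<bullet> i) * (b \<bullet> l)) *\<^sub>R ?S i l)"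
    by (subst expand) (simp add: scaleR_sum_right)
  also have "\<dots> = (\<Sum>l\<in>Basis. \<Sum>i\<in>Basis. ((a \<bullet> i) * (b \<bullet> l)) *\<^sub>R ?S l i)"
    by (subst sum.swap) (simp add: sym)
  also have "\<dots> = (\<Sum>i\<in>Basis. (b \<bullet> i) *\<^sub>R ?S i a)"
    by (subst expand) (simp add: scaleR_sum_right mult.commute)
  finally show ?thesis .
qed

section \<open>Connections given by a Christoffel map\<close>

definition curvature_tensor :: "('b::euclidean_space \<Rightarrow> 'b \<Rightarrow> 'b \<Rightarrow> 'b) \<Rightarrow> 'b \<Rightarrow> 'b \<Rightarrow> 'b \<Rightarrow> 'b \<Rightarrow> 'b" where
  "curvature_tensor G z u v w =
     frechet_derivative (\<lambda>y. G y v w) (at z) u - frechet_derivative (\<lambda>y. G y u w) (at z) v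
     + G z u (G z v w) - G z v (G z u w)"

definition ricci_tensor :: "('b::euclidean_space \<Rightarrow> 'b \<Rightarrow> 'b \<Rightarrow> 'b) \<Rightarrow> 'b \<Rightarrow> 'b \<Rightarrow> 'b \<Rightarrow> real" where
  "ricci_tensor G z v w = (\<Sum>b\<in>Basis. curvature_tensor G z b v w \<bullet> b)"

definition ricci_semisym_at :: "('b::euclidean_space \<Rightarrow> 'b \<Rightarrow> 'b \<Rightarrow> 'b) \<Rightarrow> 'b \<Rightarrow> bool" where
  "ricci_semisym_at G z \<longleftrightarrow>
     (\<forall>u v w t. - ricci_tensor G z (curvature_tensor G z u v w) t
                - ricci_tensor G z w (curvature_tensor G z u v t) = 0)"

locale christoffel_connection =
  fixes V :: "'b::euclidean_space set" and G :: "'b \<Rightarrow> 'b \<Rightarrow> 'b \<Rightarrow> 'b"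
    and D :: "('b \<Rightarrow> 'b) \<Rightarrow> ('b \<Rightarrow> 'b) \<Rightarrow> 'b \<Rightarrow> 'b"
  assumes open_V: "open V"
    and bilinear_G: "\<And>z. z \<in> V \<Longrightarrow> bilinear (G z)"
    and sm_on_G_Basis: "\<And>i j. i \<in> Basis \<Longrightarrow> j \<in> Basis \<Longrightarrow> sm_on V (\<lambda>z. G z i j)"
    and D_eq: "\<And>X Y z. sm_on V X \<Longrightarrow> sm_on V Y \<Longrightarrow> z \<in> V \<Longrightarrow>
               D X Y z = frechet_derivative Y (at z) (X z) + G z (X z) (Y z)"
begin

lemma G_Basis_expansion:
  assumes z: "z \<in> V"
  shows "G z a b = (\<Sum>i\<in>Basis. \<Sum>j\<in>Basis. ((a \<bullet> i) * (b \<bullet> j)) *\<^sub>R G z i j)"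
proof -
  have bl: "bilinear (G z)" using bilinear_G[OF z] .
  have "G z a b = G z (\<Sum>i\<in>Basis. (a \<bullet> i) *\<^sub>R i) (\<Sum>j\<in>Basis. (b \<bullet> j) *\<^sub>R j)"
    by (simp add: euclidean_representation)
  also have "\<dots> = (\<Sum>(i,j)\<in>Basis \<times> Basis. ((a \<bullet> i) * (b \<bullet> j)) *\<^sub>R G z i j)"
    by (simp add: bilinear_sum[OF bl] bilinear_lmul[OF bl] bilinear_rmul[OF bl] mult.commute)
  also have "\<dots> = (\<Sum>i\<in>Basis. \<Sum>j\<in>Basis. ((a \<bullet> i) * (b \<bullet> j)) *\<^sub>R G z i j)"
    by (simp add: sum.cartesian_product)
  finally show ?thesis .
qed

lemma sm_on_G:
  assumes X: "sm_on V X" and Y: "sm_on V Y"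
  shows "sm_on V (\<lambda>z. G z (X z) (Y z))"
proof (rule sm_on_transform_within_open[OF _ open_V G_Basis_expansion[symmetric]])
  show "sm_on V (\<lambda>z. \<Sum>i\<in>Basis. \<Sum>j\<in>Basis. ((X z \<bullet> i) * (Y z \<bullet> j)) *\<^sub>R G z i j)"
    by (intro sm_on_sum[OF open_V] sm_on_scaleR[OF open_V] sm_on_mult[OF open_V]
        sm_on_inner_const[OF open_V] X Y sm_on_G_Basis)
qed

lemma sm_on_D: "sm_on V X \<Longrightarrow> sm_on V Y \<Longrightarrow> sm_on V (D X Y)"
  by (rule sm_on_transform_within_open[OF sm_on_add[OF open_V sm_on_derivative_along sm_on_G] open_V])
    (auto simp: D_eq open_V)

lemma sm_on_curv: "sm_on V X \<Longrightarrow> sm_on V Y \<Longrightarrow> sm_on V Z \<Longrightarrow> sm_on V (curv D X Y Z)"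
  unfolding curv_def by (intro sm_on_diff[OF open_V] sm_on_D sm_on_lie[OF open_V])

lemma frechet_derivative_G_expansion:
  assumes z: "z \<in> V"
  shows "frechet_derivative (\<lambda>y. G y a b) (at z) h =
     (\<Sum>i\<in>Basis. \<Sum>j\<in>Basis. ((a \<bullet> i) * (b \<bullet> j)) *\<^sub>R frechet_derivative (\<lambda>y. G y i j) (at z) h)"
proof -
  have "((\<lambda>y. \<Sum>i\<in>Basis. \<Sum>j\<in>Basis. ((a \<bullet> i) * (b \<bullet> j)) *\<^sub>R G y i j) has_derivative
     (\<lambda>h. \<Sum>i\<in>Basis. \<Sum>j\<in>Basis. ((a \<bullet> i) * (b \<bullet> j)) *\<^sub>R frechet_derivative (\<lambda>y. G y i j) (at z) h)) (at z)"
    by (intro has_derivative_sum has_derivative_scaleR_right sm_on_has_derivative[OF sm_on_G_Basis z])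
  moreover have "frechet_derivative (\<lambda>y. G y a b) (at z)
      = frechet_derivative (\<lambda>y. \<Sum>i\<in>Basis. \<Sum>j\<in>Basis. ((a \<bullet> i) * (b \<bullet> j)) *\<^sub>R G y i j) (at z)"
    by (rule frechet_derivative_cong_open[OF open_V z G_Basis_expansion])
  ultimately show ?thesis by (simp add: frechet_derivative_at[symmetric])
qed

lemma has_derivative_G:
  assumes Y: "sm_on V Y" and Z: "sm_on V Z" and z: "z \<in> V"
  shows "((\<lambda>y. G y (Y y) (Z y)) has_derivative
    (\<lambda>h. G z (frechet_derivative Y (at z) h) (Z z) + G z (Y z) (frechet_derivative Z (at z) h)
        + frechet_derivative (\<lambda>y. G y (Y z) (Z z)) (at z) h)) (at z)"
proof -
  have "((\<lambda>y. \<Sum>i\<in>Basis. \<Sum>j\<in>Basis. ((Y y \<bullet> i) * (Z y \<bullet> j)) *\<^sub>R G y i j) has_derivative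
    (\<lambda>h. \<Sum>i\<in>Basis. \<Sum>j\<in>Basis. ((Y z \<bullet> i) * (Z z \<bullet> j)) *\<^sub>R frechet_derivative (\<lambda>y. G y i j) (at z) h
      + ((Y z \<bullet> i) * (frechet_derivative Z (at z) h \<bullet> j)
         + (frechet_derivative Y (at z) h \<bullet> i) * (Z z \<bullet> j)) *\<^sub>R G z i j)) (at z)"
    by (intro has_derivative_sum has_derivative_scaleR has_derivative_mult has_derivative_inner_left
        sm_on_has_derivative[OF Y z] sm_on_has_derivative[OF Z z] sm_on_has_derivative[OF sm_on_G_Basis z])
  then have "((\<lambda>y. \<Sum>i\<in>Basis. \<Sum>j\<in>Basis. ((Y y \<bullet> i) * (Z y \<bullet> j)) *\<^sub>R G y i j) has_derivative
    (\<lambda>h. G z (frechet_derivative Y (at z) h) (Z z) + G z (Y z) (frechet_derivative Z (at z) h)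
        + frechet_derivative (\<lambda>y. G y (Y z) (Z z)) (at z) h)) (at z)"
    by (rule has_derivative_eq_rhs)
      (simp only: sum.distrib scaleR_add_left G_Basis_expansion[OF z, symmetric]
        frechet_derivative_G_expansion[OF z, symmetric] add_ac)
  then show ?thesis
    by (rule has_derivative_transform_within_open[OF _ open_V z]) (rule G_Basis_expansion[symmetric])
qed

lemma has_derivative_D:
  assumes A: "sm_on V A" and B: "sm_on V B" and z: "z \<in> V"
  shows "(D A B has_derivative (\<lambda>h. frechet_derivative B (at z) (frechet_derivative A (at z) h)
       + (\<Sum>i\<in>Basis. (A z \<bullet> i) *\<^sub>R frechet_derivative (\<lambda>y. frechet_derivative B (at y) i) (at z) h)
       + (G z (frechet_derivative A (at z) h) (B z) + G z (A z) (frechet_derivative B (at z) h)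
        + frechet_derivative (\<lambda>y. G y (A z) (B z)) (at z) h))) (at z)"
  by (rule has_derivative_transform_within_open[OF has_derivative_add[OF
        has_derivative_derivative_along[OF open_V A B z] has_derivative_G[OF A B z]] open_V z])
    (simp add: D_eq[OF A B])

lemma curv_eq_curvature_tensor:
  assumes X: "sm_on V X" and Y: "sm_on V Y" and Z: "sm_on V Z" and z: "z \<in> V"
  shows "curv D X Y Z z = curvature_tensor G z (X z) (Y z) (Z z)"
proof -
  have bl: "bilinear (G z)" using bilinear_G[OF z] .
  have lZ: "linear (frechet_derivative Z (at z))"
    using sm_on_imp_differentiable[OF Z z] by (rule linear_frechet_derivative)
  have DD: "D A (D B Z) z = frechet_derivative Z (at z) (frechet_derivative B (at z) (A z))
       + (\<Sum>i\<in>Basis. (B z \<bullet> i) *\<^sub>R frechet_derivative (\<lambda>y. frechet_derivative Z (at y) i) (at z) (A z))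
       + (G z (frechet_derivative B (at z) (A z)) (Z z) + G z (B z) (frechet_derivative Z (at z) (A z))
        + frechet_derivative (\<lambda>y. G y (B z) (Z z)) (at z) (A z))
       + G z (A z) (frechet_derivative Z (at z) (B z) + G z (B z) (Z z))"
    if A: "sm_on V A" and B: "sm_on V B" for A B
    using D_eq[OF A sm_on_D[OF B Z] z] frechet_derivative_at[OF has_derivative_D[OF B Z z], symmetric] D_eq[OF B Z z]
    by simp
  have "D (lie X Y) Z z = frechet_derivative Z (at z) (frechet_derivative Y (at z) (X z) - frechet_derivative X (at z) (Y z))
       + G z (frechet_derivative Y (at z) (X z) - frechet_derivative X (at z) (Y z)) (Z z)"
    using D_eq[OF sm_on_lie[OF open_V X Y] Z z] by (simp add: lie_def)
  then show ?thesis
    unfolding curv_def curvature_tensor_def DD[OF X Y] DD[OF Y X]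
    using second_derivative_swap[OF open_V Z z, of "Y z" "X z"]
    by (simp add: linear_diff[OF lZ] bilinear_lsub[OF bl] bilinear_radd[OF bl] algebra_simps)
qed

lemma ric_eq_ricci_tensor:
  assumes Y: "sm_on V Y" and Z: "sm_on V Z" and z: "z \<in> V"
  shows "ric D Y Z z = ricci_tensor G z (Y z) (Z z)"
  unfolding ric_def ricci_tensor_def using curv_eq_curvature_tensor[OF sm_on_const[OF open_V] Y Z z] by simp

lemma ricci_semisym_iff: "ricci_semisym V D \<longleftrightarrow> (\<forall>z\<in>V. ricci_semisym_at G z)"
proof
  assume H: "ricci_semisym V D"
  show "\<forall>z\<in>V. ricci_semisym_at G z"
    unfolding ricci_semisym_at_def
  proof (intro ballI allI)
    fix z u v w t assume z: "z \<in> V"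
    have c: "sm_on V (\<lambda>_. a)" for a using sm_on_const[OF open_V] .
    have "- ric D (curv D (\<lambda>_. u) (\<lambda>_. v) (\<lambda>_. w)) (\<lambda>_. t) z
          - ric D (\<lambda>_. w) (curv D (\<lambda>_. u) (\<lambda>_. v) (\<lambda>_. t)) z = 0"
      using H z c unfolding ricci_semisym_def by blast
    then show "- ricci_tensor G z (curvature_tensor G z u v w) t - ricci_tensor G z w (curvature_tensor G z u v t) = 0"
      by (simp add: ric_eq_ricci_tensor[OF sm_on_curv[OF c c c] c z]
          ric_eq_ricci_tensor[OF c sm_on_curv[OF c c c] z] curv_eq_curvature_tensor[OF c c c z])
  qed
next
  assume H: "\<forall>z\<in>V. ricci_semisym_at G z"
  show "ricci_semisym V D"
    unfolding ricci_semisym_def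
  proof (intro allI impI ballI)
    fix X Y Z W :: "'b \<Rightarrow> 'b" and x assume "sm_on V X \<and> sm_on V Y \<and> sm_on V Z \<and> sm_on V W" and x: "x \<in> V"
    then show "- ric D (curv D X Y Z) W x - ric D Z (curv D X Y W) x = 0"
      using H x unfolding ricci_semisym_at_def
      by (simp add: ric_eq_ricci_tensor sm_on_curv curv_eq_curvature_tensor)
  qed
qed

end

section \<open>The connections on the base and on the cotangent bundle\<close>

lemma sum_adI: "(\<Sum>b\<in>adI. f b) = (\<Sum>j\<in>Basis. f (Inl j)) + (\<Sum>j\<in>Basis. f (Inr j))"
proof -
  have "(\<Sum>b\<in>adI. f b) = sum f (Inl ` Basis) + sum f (Inr ` Basis)"
    unfolding adI_def by (rule sum.union_disjoint) auto
  then show ?thesis by (simp add: sum.reindex)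
qed

lemma sum_times_inner_Basis:
  fixes m :: "'a::euclidean_space"
  assumes "m \<in> Basis"
  shows "(\<Sum>h\<in>Basis. f h * (h \<bullet> m)) = f m"
proof -
  have "(\<Sum>h\<in>Basis. f h * (h \<bullet> m)) = (\<Sum>h\<in>Basis. if h = m then f h else 0)"
    by (rule sum.cong) (use assms in \<open>auto simp: inner_Basis\<close>)
  then show ?thesis using assms by simp
qed

lemma sum_inner_Basis_times: "m \<in> Basis \<Longrightarrow> (\<Sum>h\<in>Basis. (h \<bullet> (m::'a::euclidean_space)) * f h) = f m"
  using sum_times_inner_Basis[of m f] by (simp add: mult.commute)

lemma inner_sum_scaleR_Basis: "m \<in> Basis \<Longrightarrow> (\<Sum>h\<in>Basis. f h *\<^sub>R h) \<bullet> (m::'a::euclidean_space) = f m"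
  by (simp add: inner_sum_left sum_times_inner_Basis)

lemma bilinear_Basis_coefficients:
  fixes C :: "'a::euclidean_space \<Rightarrow> 'a \<Rightarrow> 'c::real_vector"
  shows "bilinear (\<lambda>a b. \<Sum>i\<in>Basis. \<Sum>j\<in>Basis. ((a \<bullet> i) * (b \<bullet> j)) *\<^sub>R C i j)"
  unfolding bilinear_def
  by (auto intro!: linearI simp: inner_add_left algebra_simps sum.distrib scaleR_sum_right)

definition Gamma_map :: "('a::euclidean_space \<Rightarrow> 'a \<Rightarrow> 'a \<Rightarrow> 'a \<Rightarrow> real) \<Rightarrow> 'a \<Rightarrow> 'a \<Rightarrow> 'a \<Rightarrow> 'a" where
  "Gamma_map Gam x a b = (\<Sum>i\<in>Basis. \<Sum>j\<in>Basis. \<Sum>h\<in>Basis. (Gam i j h x * (a \<bullet> i) * (b \<bullet> j)) *\<^sub>R h)"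

lemma bilinear_Gamma_map: "bilinear (Gamma_map Gam x)"
proof -
  have "Gamma_map Gam x
      = (\<lambda>a b. \<Sum>i\<in>Basis. \<Sum>j\<in>Basis. ((a \<bullet> i) * (b \<bullet> j)) *\<^sub>R (\<Sum>h\<in>Basis. Gam i j h x *\<^sub>R h))"
    unfolding Gamma_map_def by (intro ext) (simp add: scaleR_sum_right mult.commute mult.left_commute)
  then show ?thesis by (simp only: bilinear_Basis_coefficients)
qed

lemma inner_Gamma_map:
  "m \<in> Basis \<Longrightarrow> Gamma_map Gam x a b \<bullet> m = (\<Sum>i\<in>Basis. \<Sum>j\<in>Basis. Gam i j m x * (a \<bullet> i) * (b \<bullet> j))"
  unfolding Gamma_map_def by (simp add: inner_sum_left inner_Basis if_distrib cong: if_cong)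

text \<open>\<open>pGam Gam h j (x, p)\<close> is the coefficient \<open>p\<^sub>a \<Gamma>\<^sup>a\<^sub>h\<^sub>j\<close> of \<open>\<partial>/\<partial>p\<^sub>h\<close> in \<open>E\<^sub>j\<close>,
  and \<open>pGam_deriv\<close> its derivative.\<close>

definition pGam :: "('a::euclidean_space \<Rightarrow> 'a \<Rightarrow> 'a \<Rightarrow> 'a \<Rightarrow> real) \<Rightarrow> 'a \<Rightarrow> 'a \<Rightarrow> 'a \<times> 'a \<Rightarrow> real" where
  "pGam Gam h j z = (\<Sum>k\<in>Basis. (snd z \<bullet> k) * Gam h j k (fst z))"

definition pGam_deriv :: "('a::euclidean_space \<Rightarrow> 'a \<Rightarrow> 'a \<Rightarrow> 'a \<Rightarrow> real) \<Rightarrow> 'a \<Rightarrow> 'a \<Rightarrow> 'a \<times> 'a \<Rightarrow> 'a \<times> 'a \<Rightarrow> real" where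
  "pGam_deriv Gam h j z d = (\<Sum>k\<in>Basis. (snd d \<bullet> k) * Gam h j k (fst z)
       + (snd z \<bullet> k) * frechet_derivative (Gam h j k) (at (fst z)) (fst d))"

text \<open>The Christoffel map of \<open>connT\<close> in the coordinates \<open>(x, p)\<close>: its horizontal part is
  \<open>Gamma_map\<close>, its \<open>h\<close>-th vertical component is \<open>vert_Gamma\<close>. Here \<open>vert_Gamma_frame\<close>
  collects the terms coming from \<open>\<Sum> X\<^sup>a Y\<^sup>b \<omega>\<^sub>a\<^sub>b\<^sup>d E\<^sub>d\<close> and the last term of
  \<open>vert_Gamma\<close> those coming from differentiating the frame components of \<open>Y\<close>.\<close>

definition vert_Gamma_frame :: "('a::euclidean_space \<Rightarrow> 'a \<Rightarrow> 'a \<Rightarrow> 'a \<Rightarrow> real) \<Rightarrow> ('a \<Rightarrow> 'a \<Rightarrow> 'a \<Rightarrow> real)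
   \<Rightarrow> 'a \<Rightarrow> 'a \<times> 'a \<Rightarrow> 'a \<times> 'a \<Rightarrow> 'a \<times> 'a \<Rightarrow> real" where
  "vert_Gamma_frame Gam c h z a b =
     (\<Sum>i\<in>Basis. \<Sum>j\<in>Basis. (fst a \<bullet> i) * (fst b \<bullet> j) * (\<Sum>l\<in>Basis. Gam i j l (fst z) * pGam Gam h l z))
   + (\<Sum>i\<in>Basis. \<Sum>j\<in>Basis. (fst a \<bullet> i) * (fst b \<bullet> j) * omega Gam c (Inl i) (Inl j) (Inr h) (fst z))
   - (\<Sum>i\<in>Basis. \<Sum>j\<in>Basis. (fst a \<bullet> i) * (snd b \<bullet> j - (\<Sum>k\<in>Basis. (fst b \<bullet> k) * pGam Gam j k z))
        * Gam i h j (fst z))"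

definition vert_Gamma :: "('a::euclidean_space \<Rightarrow> 'a \<Rightarrow> 'a \<Rightarrow> 'a \<Rightarrow> real) \<Rightarrow> ('a \<Rightarrow> 'a \<Rightarrow> 'a \<Rightarrow> real)
   \<Rightarrow> 'a \<Rightarrow> 'a \<times> 'a \<Rightarrow> 'a \<times> 'a \<Rightarrow> 'a \<times> 'a \<Rightarrow> real" where
  "vert_Gamma Gam c h z a b =
     vert_Gamma_frame Gam c h z a b - (\<Sum>j\<in>Basis. (fst b \<bullet> j) * pGam_deriv Gam h j z a)"

definition Gamma_cotangent :: "('a::euclidean_space \<Rightarrow> 'a \<Rightarrow> 'a \<Rightarrow> 'a \<Rightarrow> real) \<Rightarrow> ('a \<Rightarrow> 'a \<Rightarrow> 'a \<Rightarrow> real)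
   \<Rightarrow> 'a \<times> 'a \<Rightarrow> 'a \<times> 'a \<Rightarrow> 'a \<times> 'a \<Rightarrow> 'a \<times> 'a" where
  "Gamma_cotangent Gam c z a b =
     (Gamma_map Gam (fst z) (fst a) (fst b), \<Sum>h\<in>Basis. vert_Gamma Gam c h z a b *\<^sub>R h)"

lemma adE_snd:
  "snd (adE Gam (Inl j) z) = (\<Sum>h\<in>Basis. pGam Gam h j z *\<^sub>R h)" "snd (adE Gam (Inr j) z) = j"
  by (simp_all add: pGam_def)

lemma adC_Inr:
  "adC Gam (Inr h) Y = (\<lambda>y. snd (Y y) \<bullet> h - (\<Sum>j\<in>Basis. (fst (Y y) \<bullet> j) * pGam Gam h j y))"
  by (rule ext) (simp add: pGam_def)

lemma connT_coefficient_part: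
  "(\<Sum>a\<in>adI. \<Sum>b\<in>adI. \<Sum>d\<in>adI. (adC Gam a X z * adC Gam b Y z * omega Gam c a b d (fst z)) *\<^sub>R adE Gam d z)
   = (Gamma_map Gam (fst z) (fst (X z)) (fst (Y z)), \<Sum>h\<in>Basis. vert_Gamma_frame Gam c h z (X z) (Y z) *\<^sub>R h)"
  (is "?L = ?R")
proof (rule prod_eqI)
  show "fst ?L = fst ?R"
    by (simp add: sum_adI fst_sum Gamma_map_def mult_ac)
next
  show "snd ?L = snd ?R"
  proof (rule euclidean_eqI)
    fix m :: 'a assume m: "m \<in> Basis"
    show "snd ?L \<bullet> m = snd ?R \<bullet> m"
      using m
      by (simp only: sum_adI omega.simps adC.simps adE_snd snd_add snd_sum snd_scaleR
          inner_sum_left inner_add_left inner_diff_left inner_scaleR_left inner_minus_left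
          sum_times_inner_Basis pGam_def[symmetric] mult_zero_left mult_zero_right scaleR_zero_left
          scaleR_zero_right sum.neutral_const add_0_left add_0_right inner_zero_left)
        (simp add: inner_sum_scaleR_Basis vert_Gamma_frame_def sum.distrib sum_subtractf
          sum_distrib_left sum_divide_distrib sum_negf algebra_simps)
  qed
qed

locale smooth_coefficients =
  fixes U :: "'a::euclidean_space set"
    and Gam :: "'a \<Rightarrow> 'a \<Rightarrow> 'a \<Rightarrow> 'a \<Rightarrow> real"
    and c :: "'a \<Rightarrow> 'a \<Rightarrow> 'a \<Rightarrow> real"
  assumes open_U: "open U"
    and sm_on_Gam_all: "\<forall>i\<in>Basis. \<forall>j\<in>Basis. \<forall>h\<in>Basis. sm_on U (Gam i j h)"
    and sm_on_c_all: "\<forall>i\<in>Basis. \<forall>j\<in>Basis. sm_on U (c i j)"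
begin

lemma sm_on_Gam: "i \<in> Basis \<Longrightarrow> j \<in> Basis \<Longrightarrow> h \<in> Basis \<Longrightarrow> sm_on U (Gam i j h)"
  using sm_on_Gam_all by blast

lemma sm_on_c: "i \<in> Basis \<Longrightarrow> j \<in> Basis \<Longrightarrow> sm_on U (c i j)"
  using sm_on_c_all by blast

lemma open_cotangent: "open (U \<times> (UNIV :: 'a set))"
  using open_U by (simp add: open_Times)

lemma sm_on_fst_compose: "sm_on U f \<Longrightarrow> sm_on (U \<times> (UNIV :: 'a set)) (\<lambda>z. f (fst z))"
  by (rule sm_on_compose_bounded_linear[OF open_cotangent bounded_linear_fst]) auto

lemma sm_on_Gamma_map: "sm_on U (\<lambda>x. Gamma_map Gam x a b)"
  unfolding Gamma_map_def
  by (intro sm_on_sum[OF open_U] sm_on_scaleR_const[OF open_U] sm_on_mult[OF open_U] sm_on_const[OF open_U])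
    (auto intro: sm_on_Gam)

lemma christoffel_connection_connM: "christoffel_connection U (Gamma_map Gam) (connM Gam)"
proof
  show "connM Gam X Y z = frechet_derivative Y (at z) (X z) + Gamma_map Gam z (X z) (Y z)" for X Y z
    unfolding connM_def Gamma_map_def by simp
qed (simp_all add: open_U bilinear_Gamma_map sm_on_Gamma_map)

lemma linear_frechet_derivative_Gam:
  "i \<in> Basis \<Longrightarrow> j \<in> Basis \<Longrightarrow> h \<in> Basis \<Longrightarrow> x \<in> U \<Longrightarrow> linear (frechet_derivative (Gam i j h) (at x))"
  using linear_frechet_derivative[OF sm_on_imp_differentiable[OF sm_on_Gam]] by blast

lemma has_derivative_Gam_fst:
  assumes "i \<in> Basis" "j \<in> Basis" "h \<in> Basis" "fst z \<in> U"
  shows "((\<lambda>y. Gam i j h (fst y)) has_derivative (\<lambda>d. frechet_derivative (Gam i j h) (at (fst z)) (fst d))) (at z)"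
  using has_derivative_compose[OF has_derivative_fst[OF has_derivative_ident]
      sm_on_has_derivative[OF sm_on_Gam[OF assms(1-3)] assms(4)]] by simp

lemma has_derivative_pGam:
  assumes h: "h \<in> Basis" and j: "j \<in> Basis" and z: "fst z \<in> U"
  shows "(pGam Gam h j has_derivative pGam_deriv Gam h j z) (at z)"
proof -
  have "((\<lambda>y. \<Sum>k\<in>Basis. (snd y \<bullet> k) * Gam h j k (fst y)) has_derivative
      (\<lambda>d. \<Sum>k\<in>Basis. (snd z \<bullet> k) * frechet_derivative (Gam h j k) (at (fst z)) (fst d)
         + (snd d \<bullet> k) * Gam h j k (fst z))) (at z)"
    by (intro has_derivative_sum has_derivative_mult has_derivative_inner_left has_derivative_snd
        has_derivative_ident has_derivative_Gam_fst h j z)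
  then show ?thesis unfolding pGam_def[abs_def] pGam_deriv_def[abs_def]
    by (rule has_derivative_eq_rhs) (simp add: add.commute)
qed

lemma has_derivative_adC_Inl:
  "(Y has_derivative Y') (at z) \<Longrightarrow> (adC Gam (Inl j) Y has_derivative (\<lambda>d. fst (Y' d) \<bullet> j)) (at z)"
  unfolding adC.simps[abs_def] by (intro has_derivative_inner_left has_derivative_fst)

lemma has_derivative_adC_Inr:
  assumes Y: "(Y has_derivative Y') (at z)" and h: "h \<in> Basis" and z: "fst z \<in> U"
  shows "(adC Gam (Inr h) Y has_derivative (\<lambda>d. snd (Y' d) \<bullet> h -
      (\<Sum>j\<in>Basis. (fst (Y z) \<bullet> j) * pGam_deriv Gam h j z d + (fst (Y' d) \<bullet> j) * pGam Gam h j z))) (at z)"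
  unfolding adC_Inr
  by (intro has_derivative_diff has_derivative_sum has_derivative_mult has_derivative_inner_left
      has_derivative_fst has_derivative_snd Y has_derivative_pGam h z)

lemma connT_derivative_part:
  assumes Y: "(Y has_derivative Y') (at z)" and z: "fst z \<in> U"
  shows "(\<Sum>b\<in>adI. frechet_derivative (adC Gam b Y) (at z) d *\<^sub>R adE Gam b z)
     = (fst (Y' d), snd (Y' d) - (\<Sum>h\<in>Basis. (\<Sum>j\<in>Basis. (fst (Y z) \<bullet> j) * pGam_deriv Gam h j z d) *\<^sub>R h))"
    (is "?L = ?R")
proof -
  have "?L = (\<Sum>j\<in>Basis. (fst (Y' d) \<bullet> j) *\<^sub>R adE Gam (Inl j) z)
     + (\<Sum>h\<in>Basis. (snd (Y' d) \<bullet> h - (\<Sum>j\<in>Basis. (fst (Y z) \<bullet> j) * pGam_deriv Gam h j z d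
          + (fst (Y' d) \<bullet> j) * pGam Gam h j z)) *\<^sub>R adE Gam (Inr h) z)"
    unfolding sum_adI
    by (intro arg_cong2[where f="(+)"] sum.cong refl)
      (simp_all add: frechet_derivative_at[OF has_derivative_adC_Inl[OF Y], symmetric]
        frechet_derivative_at[OF has_derivative_adC_Inr[OF Y _ z], symmetric])
  also have "\<dots> = ?R" (is "?M = _")
  proof (rule prod_eqI)
    show "snd ?M = snd ?R"
      by (rule euclidean_eqI)
        (simp del: adE.simps add: snd_sum adE_snd inner_sum_left inner_diff_left inner_add_left
          sum_times_inner_Basis sum_inner_Basis_times sum.distrib sum_subtractf algebra_simps)
  qed (simp add: fst_sum euclidean_representation)
  finally show ?thesis .
qed

lemma connT_eq:
  assumes Y: "sm_on (U \<times> UNIV) Y" and z: "z \<in> U \<times> UNIV"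
  shows "connT Gam c X Y z = frechet_derivative Y (at z) (X z) + Gamma_cotangent Gam c z (X z) (Y z)"
proof -
  have fz: "fst z \<in> U" using z by (auto simp: mem_Times_iff)
  have "connT Gam c X Y z = (fst (frechet_derivative Y (at z) (X z)),
      snd (frechet_derivative Y (at z) (X z))
        - (\<Sum>h\<in>Basis. (\<Sum>j\<in>Basis. (fst (Y z) \<bullet> j) * pGam_deriv Gam h j z (X z)) *\<^sub>R h))
     + (Gamma_map Gam (fst z) (fst (X z)) (fst (Y z)), \<Sum>h\<in>Basis. vert_Gamma_frame Gam c h z (X z) (Y z) *\<^sub>R h)"
    unfolding connT_def connT_derivative_part[OF sm_on_has_derivative[OF Y z] fz] connT_coefficient_part ..
  also have "\<dots> = frechet_derivative Y (at z) (X z) + Gamma_cotangent Gam c z (X z) (Y z)"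
    unfolding Gamma_cotangent_def vert_Gamma_def
    by (simp add: prod_eq_iff scaleR_diff_left sum_subtractf algebra_simps)
  finally show ?thesis .
qed

lemmas sm_on_Gam_fst =
  sm_on_fst_compose[OF sm_on_Gam] sm_on_fst_compose[OF sm_on_frechet_derivative[OF sm_on_Gam]]

lemmas sm_on_c_fst =
  sm_on_fst_compose[OF sm_on_c] sm_on_fst_compose[OF sm_on_frechet_derivative[OF sm_on_c]]

lemma sm_on_snd_inner: "sm_on (U \<times> (UNIV::'a set)) (\<lambda>z. snd z \<bullet> k)"
  by (rule sm_on_bounded_linear[OF open_cotangent])
    (rule bounded_linear_inner_left_comp[OF bounded_linear_snd])

lemma sm_on_vert_Gamma: "h \<in> Basis \<Longrightarrow> sm_on (U \<times> UNIV) (\<lambda>z. vert_Gamma Gam c h z a b)"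
  unfolding vert_Gamma_def vert_Gamma_frame_def pGam_def pGam_deriv_def omega.simps covc_def
  by (intro sm_on_add[OF open_cotangent] sm_on_diff[OF open_cotangent] sm_on_mult[OF open_cotangent]
      sm_on_sum[OF open_cotangent] sm_on_divide_const[OF open_cotangent] sm_on_const[OF open_cotangent]
      sm_on_Gam_fst sm_on_c_fst sm_on_snd_inner; simp)

lemma sm_on_Gamma_cotangent: "sm_on (U \<times> UNIV) (\<lambda>z. Gamma_cotangent Gam c z a b)"
  unfolding Gamma_cotangent_def
  by (intro sm_on_Pair[OF open_cotangent] sm_on_fst_compose[OF sm_on_Gamma_map] sm_on_sum[OF open_cotangent]
      sm_on_scaleR_const[OF open_cotangent] sm_on_vert_Gamma)

lemma pGam_deriv_linear:
  assumes "h \<in> Basis" "j \<in> Basis" "fst z \<in> U"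
  shows "pGam_deriv Gam h j z (a + b) = pGam_deriv Gam h j z a + pGam_deriv Gam h j z b"
    and "pGam_deriv Gam h j z (r *\<^sub>R a) = r * pGam_deriv Gam h j z a"
  using assms unfolding pGam_deriv_def
  by (simp_all add: inner_add_left linear_add[OF linear_frechet_derivative_Gam]
      linear_scale[OF linear_frechet_derivative_Gam] algebra_simps sum.distrib sum_distrib_left)

lemma vert_Gamma_linear_left:
  assumes "h \<in> Basis" "fst z \<in> U"
  shows "vert_Gamma Gam c h z (a + a') b = vert_Gamma Gam c h z a b + vert_Gamma Gam c h z a' b"
    and "vert_Gamma Gam c h z (r *\<^sub>R a) b = r * vert_Gamma Gam c h z a b"
  using assms unfolding vert_Gamma_def vert_Gamma_frame_def
  by (simp_all del: omega.simps
      add: inner_add_left pGam_deriv_linear algebra_simps sum.distrib sum_subtractf sum_distrib_left)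

lemma vert_Gamma_linear_right:
  "vert_Gamma Gam c h z a (b + b') = vert_Gamma Gam c h z a b + vert_Gamma Gam c h z a b'"
  "vert_Gamma Gam c h z a (r *\<^sub>R b) = r * vert_Gamma Gam c h z a b"
  unfolding vert_Gamma_def vert_Gamma_frame_def
  by (simp_all del: omega.simps add: inner_add_left algebra_simps sum.distrib sum_subtractf sum_distrib_left)

lemma bilinear_Gamma_cotangent:
  assumes z: "fst z \<in> U"
  shows "bilinear (Gamma_cotangent Gam c z)"
  unfolding bilinear_def
proof (intro conjI allI)
  have bl: "bilinear (Gamma_map Gam (fst z))" by (rule bilinear_Gamma_map)
  show "linear (Gamma_cotangent Gam c z a)" for a
    by (rule linearI)
      (simp_all add: Gamma_cotangent_def bilinear_radd[OF bl] bilinear_rmul[OF bl] vert_Gamma_linear_right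
        scaleR_add_left sum.distrib scaleR_sum_right)
  show "linear (\<lambda>a. Gamma_cotangent Gam c z a b)" for b
    by (rule linearI)
      (simp_all add: Gamma_cotangent_def bilinear_ladd[OF bl] bilinear_lmul[OF bl] vert_Gamma_linear_left[OF _ z]
        scaleR_add_left sum.distrib scaleR_sum_right)
qed

lemma christoffel_connection_connT: "christoffel_connection (U \<times> UNIV) (Gamma_cotangent Gam c) (connT Gam c)"
proof
  show "bilinear (Gamma_cotangent Gam c z)" if "z \<in> U \<times> UNIV" for z
    using bilinear_Gamma_cotangent that by (auto simp: mem_Times_iff)
qed (simp_all add: open_cotangent sm_on_Gamma_cotangent connT_eq)

end

section \<open>Comparison of the curvatures\<close>

lemma fst_frechet_derivative:
  assumes "F differentiable (at z)"
  shows "fst (frechet_derivative F (at z) u) = frechet_derivative (\<lambda>y. fst (F y)) (at z) u"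
  using frechet_derivative_at[OF has_derivative_fst[OF assms[unfolded frechet_derivative_works]]] by metis

lemma inner_snd_frechet_derivative:
  assumes "F differentiable (at z)"
  shows "snd (frechet_derivative F (at z) u) \<bullet> m = frechet_derivative (\<lambda>y. snd (F y) \<bullet> m) (at z) u"
  using frechet_derivative_at[OF has_derivative_inner_left[OF
      has_derivative_snd[OF assms[unfolded frechet_derivative_works]]]] by metis

lemma frechet_derivative_fst_compose:
  assumes "g differentiable (at (fst z))"
  shows "frechet_derivative (\<lambda>y. g (fst y)) (at z) u = frechet_derivative g (at (fst z)) (fst u)"
proof -
  have "((\<lambda>y. g (fst y)) has_derivative (\<lambda>d. frechet_derivative g (at (fst z)) (fst d))) (at z)"
    using has_derivative_compose[OF has_derivative_fst[OF has_derivative_ident]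
        assms[unfolded frechet_derivative_works]] by simp
  then show ?thesis by (simp add: frechet_derivative_at[symmetric])
qed

lemma frechet_derivative_vertical:
  assumes "(F has_derivative F') (at z)"
  shows "frechet_derivative F (at z) (0, e) = frechet_derivative (\<lambda>q. F (fst z, q)) (at (snd z)) e"
proof -
  have "((\<lambda>q. (fst z, q)) has_derivative (\<lambda>h. (0, h))) (at (snd z))"
    by (auto intro!: derivative_eq_intros)
  then have "((\<lambda>q. F (fst z, q)) has_derivative (\<lambda>h. F' (0, h))) (at (snd z))"
    using has_derivative_compose assms by fastforce
  then show ?thesis by (simp add: frechet_derivative_at[OF assms, symmetric] frechet_derivative_at[symmetric])
qed

lemma sum_Basis_prod:
  fixes f :: "'a::euclidean_space \<times> 'b::euclidean_space \<Rightarrow> 'c::comm_monoid_add"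
  shows "(\<Sum>b\<in>Basis. f b) = (\<Sum>i\<in>Basis. f (i, 0)) + (\<Sum>i\<in>Basis. f (0, i))"
proof -
  have "inj_on (\<lambda>u. (u::'a, 0::'b)) Basis" "inj_on (\<lambda>u. (0::'a, u::'b)) Basis"
    by (auto intro!: inj_onI)
  then show ?thesis
    unfolding Basis_prod_def by (subst sum.union_disjoint) (auto simp: sum.reindex)
qed

lemma fst_Gamma_cotangent: "fst (Gamma_cotangent Gam c y a b) = Gamma_map Gam (fst y) (fst a) (fst b)"
  unfolding Gamma_cotangent_def by simp

lemma inner_snd_Gamma_cotangent:
  "m \<in> Basis \<Longrightarrow> snd (Gamma_cotangent Gam c y a b) \<bullet> m = vert_Gamma Gam c m y a b"
  unfolding Gamma_cotangent_def by (simp add: inner_sum_scaleR_Basis)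

lemma vert_Gamma_vertical_right:
  "vert_Gamma Gam c m y a (0, n) = - (\<Sum>i\<in>Basis. \<Sum>j\<in>Basis. (fst a \<bullet> i) * (n \<bullet> j) * Gam i m j (fst y))"
  unfolding vert_Gamma_def vert_Gamma_frame_def by (simp add: sum_negf)

context smooth_coefficients begin

lemma fst_curvature_tensor_cotangent:
  assumes z: "z \<in> U \<times> UNIV"
  shows "fst (curvature_tensor (Gamma_cotangent Gam c) z u v w)
       = curvature_tensor (Gamma_map Gam) (fst z) (fst u) (fst v) (fst w)"
proof -
  have fz: "fst z \<in> U" using z by (auto simp: mem_Times_iff)
  have "frechet_derivative (\<lambda>y. fst (Gamma_cotangent Gam c y a b)) (at z) d
      = frechet_derivative (\<lambda>x. Gamma_map Gam x (fst a) (fst b)) (at (fst z)) (fst d)" for a b d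
    using frechet_derivative_fst_compose[OF sm_on_imp_differentiable[OF sm_on_Gamma_map fz]]
    by (simp add: fst_Gamma_cotangent)
  then show ?thesis
    unfolding curvature_tensor_def
    by (simp add: fst_frechet_derivative[OF sm_on_imp_differentiable[OF sm_on_Gamma_cotangent z]]
        fst_Gamma_cotangent)
qed

text \<open>In a fibre direction the coefficients only see \<open>\<Gamma>\<close> contracted with the fibre vector; as
  a result the vertical part of \<open>R(\<partial>\<^sub>p, v) w\<close> vanishes, so fibre directions do not contribute
  to the Ricci trace.\<close>

lemma vert_Gamma_vertical_left:
  assumes "fst y \<in> U" "m \<in> Basis"
  shows "vert_Gamma Gam c m y (0, e) b = - (\<Sum>j\<in>Basis. (fst b \<bullet> j) * pGam Gam m j (fst y, e))"
  using assms unfolding vert_Gamma_def vert_Gamma_frame_def pGam_deriv_def pGam_def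
  by (simp add: linear_0[OF linear_frechet_derivative_Gam])

lemma has_derivative_vert_Gamma_fibre:
  assumes "x \<in> U" "m \<in> Basis"
  shows "((\<lambda>q. vert_Gamma Gam c m (x, q) v w) has_derivative (\<lambda>e.
      (\<Sum>i\<in>Basis. \<Sum>j\<in>Basis. (fst v \<bullet> i) * (fst w \<bullet> j) * (\<Sum>l\<in>Basis. Gam i j l x * pGam Gam m l (x, e)))
    + (\<Sum>i\<in>Basis. \<Sum>j\<in>Basis. (fst v \<bullet> i) * (\<Sum>k\<in>Basis. (fst w \<bullet> k) * pGam Gam j k (x, e)) * Gam i m j x)
    - (\<Sum>j\<in>Basis. (fst w \<bullet> j) * (\<Sum>k\<in>Basis. (e \<bullet> k) * frechet_derivative (Gam m j k) (at x) (fst v)))))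
    (at p)"
  unfolding vert_Gamma_def vert_Gamma_frame_def pGam_def pGam_deriv_def fst_conv snd_conv
  by (rule derivative_eq_intros | simp)+ (simp add: sum_negf)

lemma inner_snd_frechet_derivative_Gamma_cotangent_fibre:
  assumes z: "z \<in> U \<times> UNIV" and m: "m \<in> Basis"
  shows "snd (frechet_derivative (\<lambda>y. Gamma_cotangent Gam c y v w) (at z) (0, e)) \<bullet> m =
      (\<Sum>i\<in>Basis. \<Sum>j\<in>Basis. (fst v \<bullet> i) * (fst w \<bullet> j) * (\<Sum>l\<in>Basis. Gam i j l (fst z) * pGam Gam m l (fst z, e)))
    + (\<Sum>i\<in>Basis. \<Sum>j\<in>Basis. (fst v \<bullet> i) * (\<Sum>k\<in>Basis. (fst w \<bullet> k) * pGam Gam j k (fst z, e)) * Gam i m j (fst z))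
    - (\<Sum>j\<in>Basis. (fst w \<bullet> j) * (\<Sum>k\<in>Basis. (e \<bullet> k) * frechet_derivative (Gam m j k) (at (fst z)) (fst v)))"
proof -
  have fz: "fst z \<in> U" using z by (auto simp: mem_Times_iff)
  have "snd (frechet_derivative (\<lambda>y. Gamma_cotangent Gam c y v w) (at z) (0, e)) \<bullet> m
      = frechet_derivative (\<lambda>y. vert_Gamma Gam c m y v w) (at z) (0, e)"
    using inner_snd_frechet_derivative[OF sm_on_imp_differentiable[OF sm_on_Gamma_cotangent z]]
    by (simp add: inner_snd_Gamma_cotangent[OF m])
  also have "\<dots> = frechet_derivative (\<lambda>q. vert_Gamma Gam c m (fst z, q) v w) (at (snd z)) e"
    by (rule frechet_derivative_vertical[OF sm_on_has_derivative[OF sm_on_vert_Gamma[OF m] z]])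
  finally show ?thesis
    by (simp add: frechet_derivative_at[OF has_derivative_vert_Gamma_fibre[OF fz m], symmetric])
qed

lemma inner_snd_frechet_derivative_Gamma_cotangent_vertical:
  assumes z: "z \<in> U \<times> UNIV" and m: "m \<in> Basis"
  shows "snd (frechet_derivative (\<lambda>y. Gamma_cotangent Gam c y (0, e) w) (at z) v) \<bullet> m
     = - (\<Sum>j\<in>Basis. (fst w \<bullet> j) * (\<Sum>k\<in>Basis. (e \<bullet> k) * frechet_derivative (Gam m j k) (at (fst z)) (fst v)))"
proof -
  have fz: "fst z \<in> U" using z by (auto simp: mem_Times_iff)
  have "((\<lambda>y. - (\<Sum>j\<in>Basis. (fst w \<bullet> j) * (\<Sum>k\<in>Basis. (e \<bullet> k) * Gam m j k (fst y)))) has_derivative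
      (\<lambda>d. - (\<Sum>j\<in>Basis. (fst w \<bullet> j) * (\<Sum>k\<in>Basis. (e \<bullet> k) * frechet_derivative (Gam m j k) (at (fst z)) (fst d)))))
      (at z)"
    by (intro has_derivative_minus has_derivative_sum has_derivative_mult_right has_derivative_Gam_fst m fz)
  moreover have "frechet_derivative (\<lambda>y. vert_Gamma Gam c m y (0, e) w) (at z)
      = frechet_derivative (\<lambda>y. - (\<Sum>j\<in>Basis. (fst w \<bullet> j) * (\<Sum>k\<in>Basis. (e \<bullet> k) * Gam m j k (fst y)))) (at z)"
    by (rule frechet_derivative_cong_open[OF open_cotangent z])
      (auto simp: vert_Gamma_vertical_left[OF _ m] pGam_def mem_Times_iff)
  ultimately show ?thesis
    using inner_snd_frechet_derivative[OF sm_on_imp_differentiable[OF sm_on_Gamma_cotangent z]]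
    by (simp add: inner_snd_Gamma_cotangent[OF m] frechet_derivative_at[symmetric])
qed

lemma inner_snd_Gamma_cotangent_vertical:
  assumes z: "z \<in> U \<times> UNIV" and m: "m \<in> Basis"
  shows "snd (Gamma_cotangent Gam c z (0, e) (Gamma_cotangent Gam c z v w)) \<bullet> m =
      - (\<Sum>j\<in>Basis. (\<Sum>i\<in>Basis. \<Sum>l\<in>Basis. Gam i l j (fst z) * (fst v \<bullet> i) * (fst w \<bullet> l)) * pGam Gam m j (fst z, e))"
    and "snd (Gamma_cotangent Gam c z v (Gamma_cotangent Gam c z (0, e) w)) \<bullet> m =
      (\<Sum>i\<in>Basis. \<Sum>j\<in>Basis. (fst v \<bullet> i) * (\<Sum>k\<in>Basis. (fst w \<bullet> k) * pGam Gam j k (fst z, e)) * Gam i m j (fst z))"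
proof -
  have fz: "fst z \<in> U" using z by (auto simp: mem_Times_iff)
  show "snd (Gamma_cotangent Gam c z (0, e) (Gamma_cotangent Gam c z v w)) \<bullet> m =
      - (\<Sum>j\<in>Basis. (\<Sum>i\<in>Basis. \<Sum>l\<in>Basis. Gam i l j (fst z) * (fst v \<bullet> i) * (fst w \<bullet> l)) * pGam Gam m j (fst z, e))"
    by (simp add: inner_snd_Gamma_cotangent[OF m] vert_Gamma_vertical_left[OF fz m] fst_Gamma_cotangent
        inner_Gamma_map)
  have "Gamma_cotangent Gam c z (0, e) w = (0, snd (Gamma_cotangent Gam c z (0, e) w))"
    by (simp add: prod_eq_iff fst_Gamma_cotangent bilinear_lzero[OF bilinear_Gamma_map])
  have "snd (Gamma_cotangent Gam c z v (Gamma_cotangent Gam c z (0, e) w)) \<bullet> m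
      = - (\<Sum>i\<in>Basis. \<Sum>j\<in>Basis. (fst v \<bullet> i) * (snd (Gamma_cotangent Gam c z (0, e) w) \<bullet> j) * Gam i m j (fst z))"
    by (subst \<open>Gamma_cotangent Gam c z (0, e) w = _\<close>)
      (simp only: inner_snd_Gamma_cotangent[OF m] vert_Gamma_vertical_right)
  also have "\<dots> = (\<Sum>i\<in>Basis. \<Sum>j\<in>Basis.
      (fst v \<bullet> i) * (\<Sum>k\<in>Basis. (fst w \<bullet> k) * pGam Gam j k (fst z, e)) * Gam i m j (fst z))"
    by (simp add: inner_snd_Gamma_cotangent vert_Gamma_vertical_left[OF fz] sum_negf)
  finally show "snd (Gamma_cotangent Gam c z v (Gamma_cotangent Gam c z (0, e) w)) \<bullet> m =
      (\<Sum>i\<in>Basis. \<Sum>j\<in>Basis. (fst v \<bullet> i) * (\<Sum>k\<in>Basis. (fst w \<bullet> k) * pGam Gam j k (fst z, e)) * Gam i m j (fst z))" .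
qed

lemma snd_curvature_tensor_cotangent_vertical:
  assumes z: "z \<in> U \<times> UNIV"
  shows "snd (curvature_tensor (Gamma_cotangent Gam c) z (0, e) v w) = 0"
proof (rule euclidean_eqI)
  fix m :: 'a assume m: "m \<in> Basis"
  let ?x = "fst z" and ?eG = "\<lambda>h j. pGam Gam h j (fst z, e)"
  have "(\<Sum>i\<in>Basis. \<Sum>j\<in>Basis. (fst v \<bullet> i) * (fst w \<bullet> j) * (\<Sum>l\<in>Basis. Gam i j l ?x * ?eG m l))
      = (\<Sum>i\<in>Basis. \<Sum>j\<in>Basis. \<Sum>l\<in>Basis. Gam i j l ?x * (fst v \<bullet> i) * (fst w \<bullet> j) * ?eG m l)"
    by (simp add: sum_distrib_left mult_ac)
  also have "\<dots> = (\<Sum>l\<in>Basis. \<Sum>i\<in>Basis. \<Sum>j\<in>Basis. Gam i j l ?x * (fst v \<bullet> i) * (fst w \<bullet> j) * ?eG m l)"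
    by (subst sum.swap) (rule sum.cong[OF refl], rule sum.swap)
  also have "\<dots> = (\<Sum>j\<in>Basis. (\<Sum>i\<in>Basis. \<Sum>l\<in>Basis. Gam i l j ?x * (fst v \<bullet> i) * (fst w \<bullet> l)) * ?eG m j)"
    by (simp add: sum_distrib_right)
  finally show "snd (curvature_tensor (Gamma_cotangent Gam c) z (0, e) v w) \<bullet> m = 0 \<bullet> m"
    unfolding curvature_tensor_def
    using inner_snd_frechet_derivative_Gamma_cotangent_fibre[OF z m]
      inner_snd_frechet_derivative_Gamma_cotangent_vertical[OF z m] inner_snd_Gamma_cotangent_vertical[OF z m]
    by (simp add: inner_diff_left inner_add_left)
qed

lemma ricci_tensor_cotangent:
  assumes z: "z \<in> U \<times> UNIV"
  shows "ricci_tensor (Gamma_cotangent Gam c) z v w = ricci_tensor (Gamma_map Gam) (fst z) (fst v) (fst w)"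
proof -
  have "ricci_tensor (Gamma_cotangent Gam c) z v w
      = (\<Sum>i\<in>Basis. fst (curvature_tensor (Gamma_cotangent Gam c) z (i, 0) v w) \<bullet> i)
      + (\<Sum>i\<in>Basis. snd (curvature_tensor (Gamma_cotangent Gam c) z (0, i) v w) \<bullet> i)"
    unfolding ricci_tensor_def by (simp add: sum_Basis_prod inner_Pair_0)
  then show ?thesis
    unfolding ricci_tensor_def
    by (simp add: fst_curvature_tensor_cotangent[OF z] snd_curvature_tensor_cotangent_vertical[OF z])
qed

lemma ricci_semisym_at_cotangent_iff:
  assumes z: "z \<in> U \<times> UNIV"
  shows "ricci_semisym_at (Gamma_cotangent Gam c) z \<longleftrightarrow> ricci_semisym_at (Gamma_map Gam) (fst z)"
proof
  assume "ricci_semisym_at (Gamma_cotangent Gam c) z"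
  then have "- ricci_tensor (Gamma_cotangent Gam c) z (curvature_tensor (Gamma_cotangent Gam c) z (u, 0) (v, 0) (w, 0)) (t, 0)
      - ricci_tensor (Gamma_cotangent Gam c) z (w, 0) (curvature_tensor (Gamma_cotangent Gam c) z (u, 0) (v, 0) (t, 0)) = 0"
    for u v w t
    unfolding ricci_semisym_at_def by blast
  then show "ricci_semisym_at (Gamma_map Gam) (fst z)"
    unfolding ricci_semisym_at_def
    by (simp add: ricci_tensor_cotangent[OF z] fst_curvature_tensor_cotangent[OF z])
qed (simp add: ricci_semisym_at_def ricci_tensor_cotangent[OF z] fst_curvature_tensor_cotangent[OF z])

end

theorem theorem3:
  fixes U :: "'a::euclidean_space set"
    and Gam :: "'a \<Rightarrow> 'a \<Rightarrow> 'a \<Rightarrow> 'a \<Rightarrow> real"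
    and c :: "'a \<Rightarrow> 'a \<Rightarrow> 'a \<Rightarrow> real"
  assumes "open U"
    and "\<forall>i\<in>Basis. \<forall>j\<in>Basis. \<forall>h\<in>Basis. sm_on U (Gam i j h)"
    and "\<forall>i\<in>Basis. \<forall>j\<in>Basis. \<forall>h\<in>Basis. \<forall>x\<in>U. Gam i j h x = Gam j i h x"
    and "\<forall>i\<in>Basis. \<forall>j\<in>Basis. sm_on U (c i j)"
    and "\<forall>i\<in>Basis. \<forall>j\<in>Basis. \<forall>x\<in>U. c i j x = c j i x"
  shows "ricci_semisym (U \<times> UNIV) (connT Gam c) \<longleftrightarrow> ricci_semisym U (connM Gam)"
proof -
  interpret smooth_coefficients U Gam c
    using assms(1,2,4) by unfold_locales
  have "ricci_semisym (U \<times> UNIV) (connT Gam c) \<longleftrightarrow> (\<forall>z\<in>U \<times> UNIV. ricci_semisym_at (Gamma_cotangent Gam c) z)"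
    by (rule christoffel_connection.ricci_semisym_iff[OF christoffel_connection_connT])
  also have "\<dots> \<longleftrightarrow> (\<forall>x\<in>U. ricci_semisym_at (Gamma_map Gam) x)"
    using ricci_semisym_at_cotangent_iff by (force simp: mem_Times_iff)
  also have "\<dots> \<longleftrightarrow> ricci_semisym U (connM Gam)"
    by (rule christoffel_connection.ricci_semisym_iff[OF christoffel_connection_connM, symmetric])
  finally show ?thesis .
qed

end
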